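(* Let $t$ be any open term of $P_{\mathrm{PA}}$ (a nondeterministic probabilistic process term) and let $\sigma_1,\sigma_2$ be closed substitutions such that $\mathbf d(\sigma_1(x),\sigma_2(x))<1$ for every state variable $x$. Then \[ \mathbf d(\sigma_1(t),\sigma_2(t))\le \mathrm{da}\bigl(\llbracket t\rrbracket,\mathbf d(\sigma_1,\sigma_2)\bigr). \]
   Context: Probabilistic transition systems and bisimilarity metric. A signature $\Sigma$ is a countable set of operators $f$, each with an arity $r(f)\in\mathbb N$. Fix disjoint countably infinite sets $\mathcal V_s$ of state variables and $\mathcal V_d$ of distribution variables; $\mathcal V=\mathcal V_s\cup\mathcal V_d$. Open (state) terms are built from state variables and operators; closed terms (processes) $T(\Sigma)$ contain no variables. $\Delta(T(\Sigma))$ is the set of discrete probability distributions on $T(\Sigma)$, $\delta_t$ is the Dirac distribution at $t$, and for distributions $\pi_1,\dots,\pi_{r(f)}$, $f(\pi_1,\dots,\pi_{r(f)})$ is the distribution assigning $f(t_1,\dots,t_{r(f)})$ probability $\prod_i\pi_i(t_i)$. Distribution terms are: distribution variables $\mu$, $\delta(t)$ for state terms $t$, convex combinations $\sum_{i\in I}q_i\theta_i$ ($q_i\in(0,1]$, $\sum q_i=1$), and $f(\theta_1,\dots,\theta_{r(f)})$. A closed substitution $\sigma$ maps state variables to closed terms and distribution variables to distributions; it extends homomorphically to state terms and to distribution terms via $\sigma(\delta(t))=\delta_{\sigma(t)}$, $\sigma(\sum q_i\theta_i)=\sum q_i\sigma(\theta_i)$, $\sigma(f(\theta_1,\dots))=f(\sigma(\theta_1),\dots)$.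 A PTS is $(T(\Sigma),A,\to)$ with $A$ a countable set of actions and $\to\subseteq T(\Sigma)\times A\times\Delta(T(\Sigma))$; write $t\xrightarrow{a}\pi$, and $\mathit{der}(t,a)=\{\pi\mid t\xrightarrow a\pi\}$. A PGSOS rule has the form $\dfrac{\{x_i\xrightarrow{a_{i,m}}\mu_{i,m}\mid i\in I,m\in M_i\}\ \ \{x_i\not\xrightarrow{b_{i,n}}\mid i\in I,n\in N_i\}}{f(x_1,\dots,x_{r(f)})\xrightarrow{a}\theta}$ with $I=\{1,\dots,r(f)\}$, finite $M_i,N_i$, pairwise distinct $x_i\in\mathcal V_s$, pairwise distinct $\mu_{i,m}\in\mathcal V_d$, and $\theta$ a distribution term whose variables are among the $x_i$ and $\mu_{i,m}$. A PTSS $(\Sigma,A,R)$ with $R$ a countable set of PGSOS rules determines a unique supported model: $t\xrightarrow a\pi$ iff for some rule and closed substitution $\sigma$, $\sigma(x_i)\xrightarrow{a_{i,m}}\sigma(\mu_{i,m})$ for all positive premises, $\sigma(x_i)$ has no $b_{i,n}$-transition for all negative premises, $\sigma(f(x_1,\dots))=t$ and $\sigma(\theta)=\pi$. For $d:T(\Sigma)\times T(\Sigma)\to[0,1]$, the Kantorovich lifting is $K(d)(\pi,\pi')=\min_{\omega}\sum_{t,t'}d(t,t')\omega(t,t')$ over couplings $\omega$ of $\pi,\pi'$; the Hausdorff lifting is $H(\hat d)(\Pi_1,\Pi_2)=\max\{\sup_{\pi_1\in\Pi_1}\inf_{\pi_2\in\Pi_2}\hat d(\pi_1,\pi_2),\sup_{\pi_2\in\Pi_2}\inf_{\pi_1\in\Pi_1}\hat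 d(\pi_2,\pi_1)\}$ with $\inf\emptyset=1$, $\sup\emptyset=0$. Let $B(d)(t,t')=\sup_{a\in A}H(K(d))(\mathit{der}(t,a),\mathit{der}(t',a))$. The bisimilarity metric $\mathbf d$ is the least fixed point of $B$ on $[0,1]^{T(\Sigma)\times T(\Sigma)}$ ordered pointwise. The process algebra $P_{\mathrm{PA}}$: operators are the constant $0$, for each $a\in A$, $n\ge1$, $q_1,\dots,q_n\in(0,1]$ with $\sum q_i=1$ the $n$-ary prefix $a.\bigoplus_{i=1}^n[q_i]\_$, binary $+$, and binary $\|_B$ for each $B\subseteq A$. Rules: $a.\bigoplus_{i}[q_i]x_i\xrightarrow a\sum_i q_i\delta(x_i)$; from $x_1\xrightarrow a\mu_1$ infer $x_1+x_2\xrightarrow a\mu_1$; from $x_2\xrightarrow a\mu_2$ infer $x_1+x_2\xrightarrow a\mu_2$; for $a\in B$ from $x_1\xrightarrow a\mu_1$, $x_2\xrightarrow a\mu_2$ infer $x_1\|_Bx_2\xrightarrow a\mu_1\|_B\mu_2$; for $a\notin B$ from $x_1\xrightarrow a\mu_1$ infer $x_1\|_Bx_2\xrightarrow a\mu_1\|_B\delta(x_2)$ and from $x_2\xrightarrow a\mu_2$ infer $x_1\|_Bx_2\xrightarrow a\delta(x_1)\|_B\mu_2$. Multiplicities: $\mathcal M$ is the set of maps $m:\mathcal V\to\mathbb N\cup\{\infty\}$, ordered pointwise; $0$ is the zero map and $n_V$ ($V\subseteq\mathcal V$) maps $x\in V$ to $n$ and other variables to $0$; $1_x=1_{\{x\}}$.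 $\mathcal P$ is the set of discrete probability distributions on $\mathcal M$ (probabilistic multiplicities); $0$ and $n_V$ also denote the corresponding Dirac distributions in $\mathcal P$. For a subdistribution $\pi$ on $\mathcal M$ with mass $|\pi|$, its weighting is $\overline\pi(x)=\frac1{|\pi|}\sum_m\pi(m)m(x)$ if $|\pi|>0$, and $\overline\pi(x)=0$ otherwise. For $p_1,p_2\in\mathcal P$: $p_1\sqsubseteq p_2$ iff there is a coupling $\omega$ of $p_1,p_2$ (distribution on $\mathcal M\times\mathcal M$ with marginals $p_1,p_2$) with $\overline{\omega(\cdot,m)}\le m$ pointwise for all $m\in\mathcal M$, where $\omega(\cdot,m)$ is the subdistribution $m'\mapsto\omega(m',m)$. For $P\subseteq\mathcal P$, $\downarrow P=\{p\mid p\sqsubseteq p'\text{ for some }p'\in P\}$; $\mathcal D$ is the set of nonempty $P\subseteq\mathcal P$ with $\downarrow P=P$. The denotation $\llbracket t\rrbracket\in\mathcal D$ of an open term of $P_{\mathrm{PA}}$ is: $\llbracket0\rrbracket=\{\delta_0\}$; $\llbracket x\rrbracket=\downarrow\{\delta_{1_x}\}$; $p\in\llbracket t_1\|_Bt_2\rrbracket$ iff there are $p_1\in\llbracket t_1\rrbracket$, $p_2\in\llbracket t_2\rrbracket$ with $p\sqsubseteq p'$ where $p'(m)=\sum\{p_1(m_1)p_2(m_2)\mid m(x)=m_1(x)+m_2(x)\ \forall x\}$; $p\in\llbracket a.\bigoplus_{i=1}^n[q_i]t_i\rrbracket$ iff there are $p_i\in\llbracket t_i\rrbracket$ with $p\sqsubseteq\sum_i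 q_ip_i$; $\llbracket t_1+t_2\rrbracket=\llbracket t_1\rrbracket\cup\llbracket t_2\rrbracket$. $\mathcal E$ is the set of maps $e:\mathcal V\to[0,1)$. $\mathrm{dda}(m,e)=1-\prod_{x\in\mathcal V}(1-e(x))^{m(x)}$ (with $c^\infty=0$ for $0\le c<1$, $1^\infty=1$), $\mathrm{pda}(p,e)=\sum_m p(m)\mathrm{dda}(m,e)$, $\mathrm{da}(P,e)=\sup_{p\in P}\mathrm{pda}(p,e)$. For closed substitutions, $\mathbf d(\sigma_1,\sigma_2)\in\mathcal E$ is $x\mapsto\mathbf d(\sigma_1(x),\sigma_2(x))$. *)

theory Defs
  imports "HOL-Probability.Probability"
begin

text \<open>Actions 'a, state variables 'v. The prefix operator a.(+)[q_i] t_i is represented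
  by a list of (probability, argument) pairs.\<close>

datatype ('a, 'v) pterm =
    PNil
  | PVar 'v
  | Pref 'a "(real \<times> ('a, 'v) pterm) list"
  | Plus "('a, 'v) pterm" "('a, 'v) pterm"
  | Par "'a set" "('a, 'v) pterm" "('a, 'v) pterm"

text \<open>Well-formedness: prefix operators belong to the signature only when n >= 1,
  q_i in (0,1] and the q_i sum to 1.\<close>
primrec wf_term :: "('a, 'v) pterm \<Rightarrow> bool" where
  "wf_term PNil = True"
| "wf_term (PVar x) = True"
| "wf_term (Pref a qs) =
     (qs \<noteq> [] \<and> (\<forall>(q, u) \<in> set qs. 0 < q \<and> q \<le> 1) \<and> sum_list (map fst qs) = 1 \<and>
      list_all snd (map (map_prod id wf_term) qs))"
| "wf_term (Plus t1 t2) = (wf_term t1 \<and> wf_term t2)"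
| "wf_term (Par B t1 t2) = (wf_term t1 \<and> wf_term t2)"

primrec vars :: "('a, 'v) pterm \<Rightarrow> 'v set" where
  "vars PNil = {}"
| "vars (PVar x) = {x}"
| "vars (Pref a qs) = \<Union> (set (map snd (map (map_prod id vars) qs)))"
| "vars (Plus t1 t2) = vars t1 \<union> vars t2"
| "vars (Par B t1 t2) = vars t1 \<union> vars t2"

definition proc :: "('a, 'v) pterm \<Rightarrow> bool" where
  "proc t \<longleftrightarrow> vars t = {} \<and> wf_term t"

primrec subst :: "('v \<Rightarrow> ('a, 'v) pterm) \<Rightarrow> ('a, 'v) pterm \<Rightarrow> ('a, 'v) pterm" where
  "subst \<sigma> PNil = PNil"
| "subst \<sigma> (PVar x) = \<sigma> x"
| "subst \<sigma> (Pref a qs) = Pref a (map (map_prod id (subst \<sigma>)) qs)"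
| "subst \<sigma> (Plus t1 t2) = Plus (subst \<sigma> t1) (subst \<sigma> t2)"
| "subst \<sigma> (Par B t1 t2) = Par B (subst \<sigma> t1) (subst \<sigma> t2)"

definition closed_subst :: "('v \<Rightarrow> ('a, 'v) pterm) \<Rightarrow> bool" where
  "closed_subst \<sigma> \<longleftrightarrow> (\<forall>x. proc (\<sigma> x))"

definition mix :: "(real \<times> 'x pmf) list \<Rightarrow> 'x pmf" where
  "mix l = bind_pmf (pmf_of_list (map (\<lambda>(q, p). (p, q)) l)) id"

text \<open>All rules are positive, so the unique supported model is the inductively
  defined transition relation.\<close>
inductive trans :: "('a, 'v) pterm \<Rightarrow> 'a \<Rightarrow> ('a, 'v) pterm pmf \<Rightarrow> bool" where
  pref: "trans (Pref a qs) a (mix (map (\<lambda>(q, u). (q, return_pmf u)) qs))"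
| plus1: "trans t1 a \<pi> \<Longrightarrow> trans (Plus t1 t2) a \<pi>"
| plus2: "trans t2 a \<pi> \<Longrightarrow> trans (Plus t1 t2) a \<pi>"
| sync: "a \<in> B \<Longrightarrow> trans t1 a \<pi>1 \<Longrightarrow> trans t2 a \<pi>2 \<Longrightarrow>
     trans (Par B t1 t2) a (map_pmf (\<lambda>(u1, u2). Par B u1 u2) (pair_pmf \<pi>1 \<pi>2))"
| left: "a \<notin> B \<Longrightarrow> trans t1 a \<pi>1 \<Longrightarrow>
     trans (Par B t1 t2) a (map_pmf (\<lambda>u1. Par B u1 t2) \<pi>1)"
| right: "a \<notin> B \<Longrightarrow> trans t2 a \<pi>2 \<Longrightarrow>
     trans (Par B t1 t2) a (map_pmf (\<lambda>u2. Par B t1 u2) \<pi>2)"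

definition der :: "('a, 'v) pterm \<Rightarrow> 'a \<Rightarrow> ('a, 'v) pterm pmf set" where
  "der t a = {\<pi>. trans t a \<pi>}"

definition couplings :: "'x pmf \<Rightarrow> 'y pmf \<Rightarrow> ('x \<times> 'y) pmf set" where
  "couplings p q = {\<omega>. map_pmf fst \<omega> = p \<and> map_pmf snd \<omega> = q}"

definition kantorovich :: "('x \<Rightarrow> 'x \<Rightarrow> real) \<Rightarrow> 'x pmf \<Rightarrow> 'x pmf \<Rightarrow> real" where
  "kantorovich d \<pi> \<pi>' =
     Inf ((\<lambda>\<omega>. measure_pmf.expectation \<omega> (\<lambda>(t, t'). d t t')) ` couplings \<pi> \<pi>')"

definition infs :: "real set \<Rightarrow> real" where
  "infs S = (if S = {} then 1 else Inf S)"

definition sups :: "real set \<Rightarrow> real" where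
  "sups S = (if S = {} then 0 else Sup S)"

definition hausdorff :: "('y \<Rightarrow> 'y \<Rightarrow> real) \<Rightarrow> 'y set \<Rightarrow> 'y set \<Rightarrow> real" where
  "hausdorff dh P1 P2 =
     max (sups ((\<lambda>p1. infs ((\<lambda>p2. dh p1 p2) ` P2)) ` P1))
         (sups ((\<lambda>p2. infs ((\<lambda>p1. dh p2 p1) ` P1)) ` P2))"

text \<open>Functional B on [0,1]^(T(Sigma) x T(Sigma)); pseudometrics are represented as functions on
  all terms which vanish outside pairs of processes.\<close>
definition Bfun :: "(('a, 'v) pterm \<Rightarrow> ('a, 'v) pterm \<Rightarrow> real) \<Rightarrow>
                    ('a, 'v) pterm \<Rightarrow> ('a, 'v) pterm \<Rightarrow> real" where
  "Bfun d t t' =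
     (if proc t \<and> proc t'
      then sups ((\<lambda>a. hausdorff (kantorovich d) (der t a) (der t' a)) ` UNIV)
      else 0)"

definition metric_dom :: "(('a, 'v) pterm \<Rightarrow> ('a, 'v) pterm \<Rightarrow> real) set" where
  "metric_dom = {d. \<forall>t t'. 0 \<le> d t t' \<and> d t t' \<le> 1 \<and>
                          (\<not> (proc t \<and> proc t') \<longrightarrow> d t t' = 0)}"

definition bisim_metric :: "('a, 'v) pterm \<Rightarrow> ('a, 'v) pterm \<Rightarrow> real" where
  "bisim_metric = (THE d. d \<in> metric_dom \<and> Bfun d = d \<and>
                      (\<forall>d' \<in> metric_dom. Bfun d' = d' \<longrightarrow> d \<le> d'))"

type_synonym 'v mult = "'v \<Rightarrow> enat"

definition one_var :: "'v \<Rightarrow> 'v mult" where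
  "one_var x = (\<lambda>y. if y = x then 1 else 0)"

definition weighting :: "('v mult \<times> 'v mult) pmf \<Rightarrow> 'v mult \<Rightarrow> 'v \<Rightarrow> ennreal" where
  "weighting \<omega> m x =
     (let mass = (\<integral>\<^sup>+ m'. ennreal (pmf \<omega> (m', m)) \<partial>count_space UNIV) in
      if mass > 0
      then (\<integral>\<^sup>+ m'. ennreal (pmf \<omega> (m', m)) * ennreal_of_enat (m' x) \<partial>count_space UNIV) / mass
      else 0)"

definition pm_le :: "'v mult pmf \<Rightarrow> 'v mult pmf \<Rightarrow> bool" (infix "\<sqsubseteq>\<^sub>m" 50) where
  "p1 \<sqsubseteq>\<^sub>m p2 \<longleftrightarrow> (\<exists>\<omega> \<in> couplings p1 p2.
      \<forall>m x. weighting \<omega> m x \<le> ennreal_of_enat (m x))"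

definition down :: "'v mult pmf set \<Rightarrow> 'v mult pmf set" where
  "down P = {p. \<exists>p' \<in> P. p \<sqsubseteq>\<^sub>m p'}"

primrec den :: "('a, 'v) pterm \<Rightarrow> 'v mult pmf set" where
  "den PNil = {return_pmf (\<lambda>_. 0)}"
| "den (PVar x) = down {return_pmf (one_var x)}"
| "den (Pref a qs) =
     {p. \<exists>ps. list_all2 (\<lambda>(q, P) p'. p' \<in> P) (map (map_prod id den) qs) ps \<and>
             p \<sqsubseteq>\<^sub>m mix (zip (map fst qs) ps)}"
| "den (Plus t1 t2) = den t1 \<union> den t2"
| "den (Par B t1 t2) =
     {p. \<exists>p1 \<in> den t1. \<exists>p2 \<in> den t2.
        p \<sqsubseteq>\<^sub>m map_pmf (\<lambda>(m1, m2). \<lambda>x. m1 x + m2 x) (pair_pmf p1 p2)}"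

definition epow :: "real \<Rightarrow> enat \<Rightarrow> real" where
  "epow c n = (case n of enat k \<Rightarrow> c ^ k | \<infinity> \<Rightarrow> (if c = 1 then 1 else 0))"

text \<open>Product over all (possibly infinitely many) variables of factors in [0,1]:
  infimum of the finite partial products.\<close>
definition dda :: "'v mult \<Rightarrow> ('v \<Rightarrow> real) \<Rightarrow> real" where
  "dda m e = 1 - Inf ((\<lambda>F. \<Prod>x\<in>F. epow (1 - e x) (m x)) ` {F. finite F})"

definition pda :: "'v mult pmf \<Rightarrow> ('v \<Rightarrow> real) \<Rightarrow> real" where
  "pda p e = measure_pmf.expectation p (\<lambda>m. dda m e)"

definition da :: "'v mult pmf set \<Rightarrow> ('v \<Rightarrow> real) \<Rightarrow> real" where
  "da P e = Sup ((\<lambda>p. pda p e) ` P)"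

end

theory Submission
  imports Defs
begin

(* For every term t we construct, by structural induction, one probabilistic multiplicity
   p in [t] (a "witness") with d(sigma1 t, sigma2 t) <= pda(p, e), where e = d(sigma1, sigma2);
   since da([t], e) is the supremum of pda over [t], the theorem follows.  The induction needs
   non-extensiveness of each operator: d(0,0) = 0, the prefix distance is at most the weighted
   sum of the argument distances, + at most their maximum, and ||_B at most 1 - (1-d1)(1-d2);
   pda satisfies the matching identities on 0, single variables, convex combinations and
   independent sums of multiplicities. *)

section \<open>Bounded expectations, extended infima and the liftings\<close>

lemma expectation_integrable:
  fixes f :: "'x \<Rightarrow> real"
  assumes "\<And>x. a \<le> f x" "\<And>x. f x \<le> b"
  shows "integrable (measure_pmf p) f"
proof -
  have "\<bar>f x\<bar> \<le> max \<bar>a\<bar> \<bar>b\<bar>" for x using assms[of x] by (smt (verit))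
  then show ?thesis
    by (intro measure_pmf.integrable_const_bound[where B="max \<bar>a\<bar> \<bar>b\<bar>"]) auto
qed

lemma expectation_bounds:
  fixes f :: "'x \<Rightarrow> real"
  assumes "\<And>x. a \<le> f x" "\<And>x. f x \<le> b"
  shows "a \<le> measure_pmf.expectation p f" "measure_pmf.expectation p f \<le> b"
  using expectation_integrable[OF assms, of p] assms
  by (auto intro!: measure_pmf.integral_ge_const measure_pmf.integral_le_const)

lemma expectation_mono:
  fixes f g :: "'x \<Rightarrow> real"
  assumes "\<And>x. 0 \<le> f x" "\<And>x. f x \<le> g x" "\<And>x. g x \<le> 1"
  shows "measure_pmf.expectation p f \<le> measure_pmf.expectation p g"
proof (rule integral_mono)
  show "integrable (measure_pmf p) f" "integrable (measure_pmf p) g"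
    using assms by (auto intro!: expectation_integrable[of 0 _ 1] intro: order_trans)
qed (use assms in auto)

lemma expectation_one_minus:
  fixes f :: "'x \<Rightarrow> real"
  assumes "\<And>x. 0 \<le> f x" "\<And>x. f x \<le> 1"
  shows "measure_pmf.expectation p (\<lambda>x. 1 - f x) = 1 - measure_pmf.expectation p f"
  using expectation_integrable[of 0 f 1, OF assms] by (subst Bochner_Integration.integral_diff) auto

lemma nn_integral_eq_expectation:
  fixes f :: "'x \<Rightarrow> real"
  assumes "\<And>x. 0 \<le> f x" "\<And>x. f x \<le> b"
  shows "(\<integral>\<^sup>+x. ennreal (f x) \<partial>measure_pmf p) = ennreal (measure_pmf.expectation p f)"
  using expectation_integrable[of 0 f b] assms by (intro nn_integral_eq_integral) auto

lemma expectation_pair_prod: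
  fixes f h :: "'x \<Rightarrow> real"
  assumes "\<And>x. 0 \<le> f x" "\<And>x. f x \<le> 1" "\<And>x. 0 \<le> h x" "\<And>x. h x \<le> 1"
  shows "measure_pmf.expectation (pair_pmf p q) (\<lambda>z. f (fst z) * h (snd z))
         = measure_pmf.expectation p f * measure_pmf.expectation q h"
proof -
  have nnp: "0 \<le> measure_pmf.expectation p f" and nnq: "0 \<le> measure_pmf.expectation q h"
    using assms by auto
  have "ennreal (measure_pmf.expectation (pair_pmf p q) (\<lambda>z. f (fst z) * h (snd z)))
        = (\<integral>\<^sup>+z. ennreal (f (fst z) * h (snd z)) \<partial>pair_pmf p q)"
    by (rule nn_integral_eq_expectation[symmetric, where b=1]) (use assms in \<open>auto intro: mult_le_one\<close>)
  also have "\<dots> = (\<integral>\<^sup>+a. ennreal (f a) * (\<integral>\<^sup>+b. ennreal (h b) \<partial>q) \<partial>p)"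
    by (simp add: nn_integral_pair_pmf' ennreal_mult assms nn_integral_cmult)
  also have "\<dots> = (\<integral>\<^sup>+a. ennreal (f a) \<partial>p) * (\<integral>\<^sup>+b. ennreal (h b) \<partial>q)"
    by (simp add: nn_integral_multc)
  also have "\<dots> = ennreal (measure_pmf.expectation p f * measure_pmf.expectation q h)"
    using nn_integral_eq_expectation[of f 1 p] nn_integral_eq_expectation[of h 1 q] assms nnp nnq
    by (simp add: ennreal_mult)
  finally show ?thesis
    using nnp nnq by (subst (asm) ennreal_inj) (auto intro!: mult_nonneg_nonneg assms Bochner_Integration.integral_nonneg)
qed

lemma infs_bounds:
  assumes "\<And>s. s \<in> S \<Longrightarrow> 0 \<le> s \<and> s \<le> 1"
  shows "0 \<le> infs S \<and> infs S \<le> 1"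
proof (cases "S = {}")
  case False
  then obtain s where s: "s \<in> S" by auto
  have "Inf S \<le> s" using s assms by (intro cInf_lower bdd_belowI[of _ 0]) auto
  moreover have "0 \<le> Inf S" using False assms by (intro cInf_greatest) auto
  ultimately show ?thesis using False assms[OF s] by (simp add: infs_def)
qed (simp add: infs_def)

lemma sups_bounds:
  assumes "\<And>s. s \<in> S \<Longrightarrow> 0 \<le> s \<and> s \<le> 1"
  shows "0 \<le> sups S \<and> sups S \<le> 1"
proof (cases "S = {}")
  case False
  then obtain s where s: "s \<in> S" by auto
  have "s \<le> Sup S" using s assms by (intro cSup_upper bdd_aboveI[of _ 1]) auto
  moreover have "Sup S \<le> 1" using False assms by (intro cSup_least) auto
  ultimately show ?thesis using False assms[OF s] by (simp add: sups_def)
qed (simp add: sups_def)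

lemma infs_lower: "s \<in> S \<Longrightarrow> (\<And>s. s \<in> S \<Longrightarrow> 0 \<le> s) \<Longrightarrow> infs S \<le> s"
  unfolding infs_def by (auto intro!: cInf_lower bdd_belowI[of _ 0])

lemma sups_upper: "s \<in> S \<Longrightarrow> (\<And>s. s \<in> S \<Longrightarrow> s \<le> 1) \<Longrightarrow> s \<le> sups S"
  unfolding sups_def by (auto intro!: cSup_upper bdd_aboveI[of _ 1])

lemma sups_least: "(\<And>s. s \<in> S \<Longrightarrow> s \<le> c) \<Longrightarrow> 0 \<le> c \<Longrightarrow> sups S \<le> c"
  unfolding sups_def by (auto intro!: cSup_least)

lemma infs_greatest: "S \<noteq> {} \<Longrightarrow> (\<And>s. s \<in> S \<Longrightarrow> c \<le> s) \<Longrightarrow> c \<le> infs S"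
  unfolding infs_def by (auto intro!: cInf_greatest)

lemma infs_less_witness:
  assumes "infs S \<le> c" "c < 1" "0 < \<epsilon>"
  shows "\<exists>s\<in>S. s < c + \<epsilon>"
proof -
  have "S \<noteq> {}" using assms by (auto simp: infs_def)
  moreover from this have "Inf S < c + \<epsilon>" using assms by (simp add: infs_def)
  ultimately show ?thesis using cInf_lessD by blast
qed

lemma pair_pmf_coupling: "pair_pmf \<pi> \<pi>' \<in> couplings \<pi> \<pi>'"
  by (simp add: couplings_def map_fst_pair_pmf map_snd_pair_pmf)

lemma return_pmf_coupling: "return_pmf (x, y) \<in> couplings (return_pmf x) (return_pmf y)"
  by (simp add: couplings_def)

lemma kantorovich_le_coupling:
  assumes "\<omega> \<in> couplings \<pi> \<pi>'" "\<And>x y. 0 \<le> d x y"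
  shows "kantorovich d \<pi> \<pi>' \<le> measure_pmf.expectation \<omega> (\<lambda>(t, t'). d t t')"
  unfolding kantorovich_def
  by (rule cInf_lower) (use assms in \<open>auto intro!: bdd_belowI[of _ 0] split: prod.splits\<close>)

lemma coupling_expectation_bounds:
  fixes d :: "'x \<Rightarrow> 'y \<Rightarrow> real"
  assumes "\<And>x y. 0 \<le> d x y \<and> d x y \<le> 1"
  shows "0 \<le> measure_pmf.expectation \<omega> (\<lambda>(t, t'). d t t') \<and>
         measure_pmf.expectation \<omega> (\<lambda>(t, t'). d t t') \<le> 1"
  using expectation_bounds[of 0 "\<lambda>(t, t'). d t t'" 1 \<omega>] assms by (auto split: prod.splits)

lemma kantorovich_bounds:
  assumes "\<And>x y. 0 \<le> d x y \<and> d x y \<le> 1"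
  shows "0 \<le> kantorovich d \<pi> \<pi>' \<and> kantorovich d \<pi> \<pi>' \<le> 1"
proof
  show "0 \<le> kantorovich d \<pi> \<pi>'"
    unfolding kantorovich_def using pair_pmf_coupling[of \<pi> \<pi>'] coupling_expectation_bounds[of d, OF assms]
    by (intro cInf_greatest) auto
  have "kantorovich d \<pi> \<pi>' \<le> measure_pmf.expectation (pair_pmf \<pi> \<pi>') (\<lambda>(t, t'). d t t')"
    using assms by (intro kantorovich_le_coupling pair_pmf_coupling) auto
  also have "\<dots> \<le> 1" using coupling_expectation_bounds[of d, OF assms] by blast
  finally show "kantorovich d \<pi> \<pi>' \<le> 1" .
qed

lemma kantorovich_mono:
  assumes "\<And>x y. 0 \<le> d1 x y" "\<And>x y. d1 x y \<le> d2 x y" "\<And>x y. d2 x y \<le> 1"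
  shows "kantorovich d1 \<pi> \<pi>' \<le> kantorovich d2 \<pi> \<pi>'"
  unfolding kantorovich_def[of d2]
proof (rule cInf_greatest)
  show "(\<lambda>\<omega>. measure_pmf.expectation \<omega> (\<lambda>(t, t'). d2 t t')) ` couplings \<pi> \<pi>' \<noteq> {}"
    using pair_pmf_coupling by blast
next
  fix x assume "x \<in> (\<lambda>\<omega>. measure_pmf.expectation \<omega> (\<lambda>(t, t'). d2 t t')) ` couplings \<pi> \<pi>'"
  then obtain \<omega> where w: "\<omega> \<in> couplings \<pi> \<pi>'"
    and x: "x = measure_pmf.expectation \<omega> (\<lambda>(t, t'). d2 t t')" by auto
  have "kantorovich d1 \<pi> \<pi>' \<le> measure_pmf.expectation \<omega> (\<lambda>(t, t'). d1 t t')"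
    by (rule kantorovich_le_coupling[OF w assms(1)])
  also have "\<dots> \<le> x" unfolding x
    by (rule expectation_mono) (auto split: prod.splits simp: assms)
  finally show "kantorovich d1 \<pi> \<pi>' \<le> x" .
qed

lemma kantorovich_less_witness:
  assumes "kantorovich d \<pi> \<rho> < c"
  shows "\<exists>\<omega>\<in>couplings \<pi> \<rho>. measure_pmf.expectation \<omega> (\<lambda>(t, t'). d t t') < c"
  using assms cInf_lessD[of "(\<lambda>\<omega>. measure_pmf.expectation \<omega> (\<lambda>(t, t'). d t t')) ` couplings \<pi> \<rho>"]
    pair_pmf_coupling[of \<pi> \<rho>]
  unfolding kantorovich_def by blast

definition hemi :: "('y \<Rightarrow> 'y \<Rightarrow> real) \<Rightarrow> 'y set \<Rightarrow> 'y set \<Rightarrow> real" where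
  "hemi dh P Q = sups ((\<lambda>p. infs ((\<lambda>q. dh p q) ` Q)) ` P)"

lemma hausdorff_hemi: "hausdorff dh P Q = max (hemi dh P Q) (hemi dh Q P)"
  by (simp add: hausdorff_def hemi_def)

lemma hausdorff_sym: "hausdorff dh P Q = hausdorff dh Q P"
  by (simp add: hausdorff_hemi max.commute)

lemma hausdorff_single: "hausdorff dh {x} {y} = max (dh x y) (dh y x)"
  by (simp add: hausdorff_hemi hemi_def infs_def sups_def)

lemma hausdorff_empty: "hausdorff dh {} {} = 0"
  by (simp add: hausdorff_hemi hemi_def sups_def)

lemma hemi_infs_le:
  assumes "\<And>x y. 0 \<le> dh x y \<and> dh x y \<le> 1" "p \<in> P"
  shows "infs ((\<lambda>q. dh p q) ` Q) \<le> hemi dh P Q"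
proof -
  have "infs ((\<lambda>q. dh p' q) ` Q) \<le> 1" for p'
    using infs_bounds[of "(\<lambda>q. dh p' q) ` Q"] assms(1) by auto
  then show ?thesis unfolding hemi_def using assms(2) by (intro sups_upper) auto
qed

lemma hemi_bounds:
  assumes "\<And>x y. 0 \<le> dh x y \<and> dh x y \<le> 1"
  shows "0 \<le> hemi dh P Q \<and> hemi dh P Q \<le> 1"
  unfolding hemi_def by (rule sups_bounds) (auto intro!: infs_bounds simp: assms)

lemma hausdorff_bounds:
  assumes "\<And>x y. 0 \<le> dh x y \<and> dh x y \<le> 1"
  shows "0 \<le> hausdorff dh P Q \<and> hausdorff dh P Q \<le> 1"
  using hemi_bounds[of dh P Q, OF assms] hemi_bounds[of dh Q P, OF assms]
  by (simp add: hausdorff_hemi le_max_iff_disj)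

lemma infs_antimono:
  assumes "\<And>x y. 0 \<le> dh x y \<and> dh x y \<le> 1" "Q1 \<subseteq> Q"
  shows "infs ((\<lambda>q. dh p q) ` Q) \<le> infs ((\<lambda>q. dh p q) ` Q1)"
proof (cases "Q1 = {}")
  case True
  have "infs ((\<lambda>q. dh p q) ` Q) \<le> 1" by (rule conjunct2[OF infs_bounds]) (use assms(1) in auto)
  then show ?thesis using True by (simp add: infs_def)
next
  case False
  show ?thesis by (rule infs_greatest) (use False assms in \<open>auto intro!: infs_lower\<close>)
qed

lemma hemi_mono:
  assumes "\<And>x y. 0 \<le> dh1 x y" "\<And>x y. dh1 x y \<le> dh2 x y" "\<And>x y. dh2 x y \<le> 1"
  shows "hemi dh1 P Q \<le> hemi dh2 P Q"
proof -
  have b2: "\<And>x y. 0 \<le> dh2 x y \<and> dh2 x y \<le> 1" using assms by (meson order_trans)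
  have "infs ((\<lambda>q. dh1 p q) ` Q) \<le> infs ((\<lambda>q. dh2 p q) ` Q)" for p
    by (cases "Q = {}") (auto intro!: infs_greatest order_trans[OF infs_lower assms(2)] simp: assms(1))
  moreover have "infs ((\<lambda>q. dh2 p q) ` Q) \<le> hemi dh2 P Q" if "p \<in> P" for p
    using hemi_infs_le[of dh2 p P Q, OF b2 that] .
  ultimately show ?thesis
    unfolding hemi_def[of dh1] using hemi_bounds[of dh2 P Q, OF b2]
    by (auto intro!: sups_least intro: order_trans)
qed

lemma hemi_union:
  assumes dh: "\<And>x y. 0 \<le> dh x y \<and> dh x y \<le> 1"
  shows "hemi dh (A1 \<union> A2) (B1 \<union> B2) \<le> max (hemi dh A1 B1) (hemi dh A2 B2)"
proof -
  have "infs ((\<lambda>q. dh p q) ` (B1 \<union> B2)) \<le> hemi dh A B" if "p \<in> A" "B = B1 \<or> B = B2" for p A B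
    using infs_antimono[of dh B "B1 \<union> B2" p, OF dh] hemi_infs_le[of dh p A B, OF dh that(1)] that(2)
    by auto
  then have "infs ((\<lambda>q. dh p q) ` (B1 \<union> B2)) \<le> max (hemi dh A1 B1) (hemi dh A2 B2)"
    if "p \<in> A1 \<union> A2" for p
    using that by (auto intro: max.coboundedI1 max.coboundedI2)
  moreover have "0 \<le> max (hemi dh A1 B1) (hemi dh A2 B2)"
    using hemi_bounds[of dh A1 B1, OF dh] by (simp add: le_max_iff_disj)
  ultimately show ?thesis unfolding hemi_def[of dh "A1 \<union> A2"] by (auto intro!: sups_least)
qed

section \<open>The bisimilarity metric as least fixed point\<close>

lemma metric_dom_bounds: "d \<in> metric_dom \<Longrightarrow> 0 \<le> d t t' \<and> d t t' \<le> 1"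
  by (simp add: metric_dom_def)

lemma metric_dom_nonproc: "d \<in> metric_dom \<Longrightarrow> \<not> (proc t \<and> proc t') \<Longrightarrow> d t t' = 0"
  by (simp add: metric_dom_def)

lemma kantorovich_metric_dom_bounds:
  "d \<in> metric_dom \<Longrightarrow> 0 \<le> kantorovich d \<pi> \<pi>' \<and> kantorovich d \<pi> \<pi>' \<le> 1"
  by (rule kantorovich_bounds) (simp add: metric_dom_bounds)

lemma Bfun_metric_dom:
  assumes "d \<in> metric_dom"
  shows "Bfun d \<in> metric_dom"
proof -
  have "0 \<le> hausdorff (kantorovich d) P Q \<and> hausdorff (kantorovich d) P Q \<le> 1" for P Q
    by (rule hausdorff_bounds) (rule kantorovich_metric_dom_bounds[OF assms])
  then have "0 \<le> sups (range (\<lambda>a. hausdorff (kantorovich d) (der t a) (der t' a))) \<and>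
             sups (range (\<lambda>a. hausdorff (kantorovich d) (der t a) (der t' a))) \<le> 1" for t t'
    by (intro sups_bounds) auto
  then show ?thesis unfolding metric_dom_def Bfun_def by auto
qed

text \<open>B is monotone on metric_dom, since both liftings are.\<close>
lemma Bfun_mono:
  fixes d1 d2 :: "('a, 'v) pterm \<Rightarrow> ('a, 'v) pterm \<Rightarrow> real"
  assumes "d1 \<in> metric_dom" "d2 \<in> metric_dom" "\<And>x y. d1 x y \<le> d2 x y"
  shows "Bfun d1 t t' \<le> Bfun d2 t t'"
proof -
  note K1 = kantorovich_metric_dom_bounds[OF assms(1)]
  note K2 = kantorovich_metric_dom_bounds[OF assms(2)]
  have "kantorovich d1 \<pi> \<pi>' \<le> kantorovich d2 \<pi> \<pi>'" for \<pi> \<pi>'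
    by (rule kantorovich_mono) (use metric_dom_bounds[OF assms(1)] metric_dom_bounds[OF assms(2)] assms(3) in auto)
  then have h: "hausdorff (kantorovich d1) P Q \<le> hausdorff (kantorovich d2) P Q" for P Q
    unfolding hausdorff_hemi using K1 K2
    by (intro max.mono hemi_mono) auto
  have hb: "0 \<le> hausdorff (kantorovich d) P Q \<and> hausdorff (kantorovich d) P Q \<le> 1"
    if "d \<in> metric_dom" for d :: "('a, 'v) pterm \<Rightarrow> ('a, 'v) pterm \<Rightarrow> real" and P Q
    using hausdorff_bounds[of "kantorovich d" P Q] kantorovich_metric_dom_bounds[OF that] by blast
  show ?thesis unfolding Bfun_def
    using sups_bounds[of "range (\<lambda>a. hausdorff (kantorovich d2) (der t a) (der t' a))"] hb[OF assms(2)]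
    by (auto intro!: sups_least order_trans[OF h sups_upper] simp: hb[OF assms(1)])
qed

lemma Bfun_sym: "Bfun d t t' = Bfun d t' t"
  unfolding Bfun_def by (auto simp: hausdorff_sym conj_commute)

text \<open>Prefixed points of B; by Knaster--Tarski their pointwise infimum is the least fixed point.\<close>
definition prefixed :: "(('a, 'v) pterm \<Rightarrow> ('a, 'v) pterm \<Rightarrow> real) set" where
  "prefixed = {d \<in> metric_dom. \<forall>t t'. Bfun d t t' \<le> d t t'}"

definition lfp_metric :: "('a, 'v) pterm \<Rightarrow> ('a, 'v) pterm \<Rightarrow> real" where
  "lfp_metric t t' = Inf ((\<lambda>d. d t t') ` prefixed)"

text \<open>The discrete distance (1 on all pairs of processes) is prefixed, so the infimum is
  taken over a nonempty set.\<close>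
lemma discrete_prefixed: "(\<lambda>(t :: ('a, 'v) pterm) t'. if proc t \<and> proc t' then 1 else 0) \<in> prefixed"
  unfolding prefixed_def
proof (intro CollectI conjI allI)
  show md: "(\<lambda>(t :: ('a, 'v) pterm) t'. if proc t \<and> proc t' then 1 else 0 :: real) \<in> metric_dom"
    by (simp add: metric_dom_def)
  fix t t' :: "('a, 'v) pterm"
  show "Bfun (\<lambda>t t'. if proc t \<and> proc t' then 1 else 0) t t' \<le> (if proc t \<and> proc t' then 1 else 0)"
    using metric_dom_bounds[OF Bfun_metric_dom[OF md], of t t']
      metric_dom_nonproc[OF Bfun_metric_dom[OF md], of t t'] by auto
qed

lemma lfp_metric_le: "d \<in> prefixed \<Longrightarrow> lfp_metric t t' \<le> d t t'"
  unfolding lfp_metric_def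
  by (rule cInf_lower) (auto simp: prefixed_def metric_dom_def intro!: bdd_belowI[of _ 0])

lemma lfp_metric_dom: "(lfp_metric :: ('a, 'v) pterm \<Rightarrow> _) \<in> metric_dom"
proof -
  have ge: "0 \<le> lfp_metric t t'" for t t' :: "('a, 'v) pterm"
    unfolding lfp_metric_def
  proof (rule cInf_greatest)
    show "(\<lambda>d. d t t') ` prefixed \<noteq> {}" using discrete_prefixed by blast
  qed (auto simp: prefixed_def metric_dom_def)
  show ?thesis
    using ge lfp_metric_le[OF discrete_prefixed] unfolding metric_dom_def
    by (smt (verit) mem_Collect_eq)
qed

lemma lfp_metric_prefixed: "(lfp_metric :: ('a, 'v) pterm \<Rightarrow> _) \<in> prefixed"
proof -
  have "Bfun lfp_metric t t' \<le> d t t'" if d: "d \<in> prefixed" for d and t t' :: "('a, 'v) pterm"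
  proof -
    have "Bfun lfp_metric t t' \<le> Bfun d t t'"
      using d lfp_metric_le[OF d] by (intro Bfun_mono lfp_metric_dom) (auto simp: prefixed_def)
    also have "\<dots> \<le> d t t'" using d by (simp add: prefixed_def)
    finally show ?thesis .
  qed
  then have "Bfun lfp_metric t t' \<le> lfp_metric t t'" for t t' :: "('a, 'v) pterm"
    unfolding lfp_metric_def[of t t'] using discrete_prefixed by (intro cInf_greatest) auto
  then show ?thesis using lfp_metric_dom by (auto simp: prefixed_def)
qed

lemma lfp_metric_fixpoint: "Bfun lfp_metric = lfp_metric"
proof -
  have pre: "lfp_metric \<in> metric_dom" "\<And>t t'. Bfun lfp_metric t t' \<le> lfp_metric t t'"
    using lfp_metric_prefixed by (auto simp: prefixed_def)
  have "Bfun lfp_metric \<in> prefixed"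
    unfolding prefixed_def using Bfun_metric_dom[OF pre(1)] Bfun_mono[OF Bfun_metric_dom[OF pre(1)] pre]
    by blast
  then show ?thesis using pre(2) lfp_metric_le by (intro ext antisym) auto
qed

lemma bisim_metric_eq_lfp: "(bisim_metric :: ('a, 'v) pterm \<Rightarrow> _) = lfp_metric"
  unfolding bisim_metric_def
proof (rule the_equality)
  show "lfp_metric \<in> metric_dom \<and> Bfun lfp_metric = lfp_metric \<and>
        (\<forall>d'\<in>metric_dom. Bfun d' = d' \<longrightarrow> lfp_metric \<le> d')"
    using lfp_metric_dom lfp_metric_fixpoint lfp_metric_le by (fastforce simp: prefixed_def le_fun_def)
next
  fix d :: "('a, 'v) pterm \<Rightarrow> ('a, 'v) pterm \<Rightarrow> real"
  assume "d \<in> metric_dom \<and> Bfun d = d \<and> (\<forall>d'\<in>metric_dom. Bfun d' = d' \<longrightarrow> d \<le> d')"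
  then show "d = lfp_metric"
    using lfp_metric_dom lfp_metric_fixpoint lfp_metric_le[of d]
    by (intro antisym) (auto simp: prefixed_def le_fun_def)
qed

lemma bisim_metric_dom: "bisim_metric \<in> metric_dom"
  by (simp add: bisim_metric_eq_lfp lfp_metric_dom)

lemma bisim_metric_fixpoint: "Bfun bisim_metric = bisim_metric"
  by (simp add: bisim_metric_eq_lfp lfp_metric_fixpoint)

lemma bisim_metric_least:
  "d \<in> metric_dom \<Longrightarrow> (\<And>t t'. Bfun d t t' \<le> d t t') \<Longrightarrow> bisim_metric t t' \<le> d t t'"
  by (simp add: bisim_metric_eq_lfp lfp_metric_le prefixed_def)

lemma bisim_metric_sym: "bisim_metric t t' = bisim_metric t' t"
  by (metis bisim_metric_fixpoint Bfun_sym)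

lemma bisim_metric_bounds: "0 \<le> bisim_metric t t' \<and> bisim_metric t t' \<le> 1"
  by (rule metric_dom_bounds[OF bisim_metric_dom])

lemma kantorovich_bisim_bounds:
  "0 \<le> kantorovich bisim_metric \<pi> \<pi>' \<and> kantorovich bisim_metric \<pi> \<pi>' \<le> 1"
  by (rule kantorovich_metric_dom_bounds[OF bisim_metric_dom])

lemma hausdorff_le_bisim_metric:
  assumes "proc t" "proc t'"
  shows "hausdorff (kantorovich bisim_metric) (der t a) (der t' a) \<le> bisim_metric t t'"
proof -
  have "hausdorff (kantorovich bisim_metric) (der t a) (der t' a) \<le> Bfun bisim_metric t t'"
    unfolding Bfun_def using assms hausdorff_bounds[of "kantorovich bisim_metric"] kantorovich_bisim_bounds
    by (auto intro!: sups_upper)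
  then show ?thesis by (simp add: bisim_metric_fixpoint)
qed

lemma bisim_metric_le_hausdorff:
  assumes "\<And>a. hausdorff (kantorovich bisim_metric) (der t a) (der t' a) \<le> c" "0 \<le> c"
  shows "bisim_metric t t' \<le> c"
proof -
  have "Bfun bisim_metric t t' \<le> c" unfolding Bfun_def using assms by (auto intro!: sups_least)
  then show ?thesis by (simp add: bisim_metric_fixpoint)
qed

section \<open>Convex combinations of distributions\<close>

definition weights :: "(real \<times> 'b) list \<Rightarrow> bool" where
  "weights l \<longleftrightarrow> (\<forall>z\<in>set l. 0 \<le> fst z) \<and> sum_list (map fst l) = 1"

lemma weights_map_snd: "weights l \<Longrightarrow> weights (map (\<lambda>z. (fst z, g z)) l)"
  by (simp add: weights_def o_def)

lemma weights_pmf_of_list_wf: "weights l \<Longrightarrow> pmf_of_list_wf (map (\<lambda>(q, p). (p, q)) l)"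
  by (auto simp: weights_def pmf_of_list_wf_def o_def case_prod_beta)

lemma sum_list_group_by_fst:
  fixes g :: "'x \<Rightarrow> 'b::comm_semiring_1" and w :: "real \<Rightarrow> 'b"
  assumes "finite A" "fst ` set L \<subseteq> A"
  shows "(\<Sum>a\<in>A. g a * sum_list (map (\<lambda>z. w (snd z)) (filter (\<lambda>z. fst z = a) L)))
       = sum_list (map (\<lambda>z. g (fst z) * w (snd z)) L)"
  using assms(2)
proof (induction L)
  case (Cons z L)
  have "(\<Sum>a\<in>A. g a * sum_list (map (\<lambda>z. w (snd z)) (filter (\<lambda>z. fst z = a) (z # L))))
      = (\<Sum>a\<in>A. (if a = fst z then g a * w (snd z) else 0)
           + g a * sum_list (map (\<lambda>z. w (snd z)) (filter (\<lambda>z. fst z = a) L)))"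
    by (intro sum.cong refl) (auto simp: distrib_left)
  also have "\<dots> = g (fst z) * w (snd z)
      + (\<Sum>a\<in>A. g a * sum_list (map (\<lambda>z. w (snd z)) (filter (\<lambda>z. fst z = a) L)))"
    using Cons.prems assms(1) by (simp add: sum.distrib)
  finally show ?case using Cons by simp
qed simp

lemma ennreal_sum_list:
  assumes "\<And>x. x \<in> set xs \<Longrightarrow> 0 \<le> f x"
  shows "ennreal (sum_list (map f xs)) = sum_list (map (\<lambda>x. ennreal (f x)) xs)"
  using assms
proof (induction xs)
  case (Cons a xs)
  then have "0 \<le> f a" "0 \<le> sum_list (map f xs)" by (auto intro!: sum_list_nonneg)
  then show ?case using Cons by simp
qed simp

lemma nn_integral_mix:
  assumes "weights l"
  shows "(\<integral>\<^sup>+x. f x \<partial>mix l)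
       = sum_list (map (\<lambda>z. ennreal (fst z) * (\<integral>\<^sup>+x. f x \<partial>measure_pmf (snd z))) l)"
proof -
  define L where "L = map (\<lambda>(q, p). (p, q)) l"
  have wf: "pmf_of_list_wf L" unfolding L_def by (rule weights_pmf_of_list_wf[OF assms])
  have "(\<integral>\<^sup>+x. f x \<partial>mix l) = (\<integral>\<^sup>+p. (\<integral>\<^sup>+x. f x \<partial>measure_pmf p) \<partial>measure_pmf (pmf_of_list L))"
    unfolding mix_def L_def by simp
  also have "\<dots> = (\<Sum>p\<in>set (map fst L). (\<integral>\<^sup>+x. f x \<partial>measure_pmf p) * ennreal (pmf (pmf_of_list L) p))"
    by (rule nn_integral_measure_pmf_support) (use set_pmf_of_list[OF wf] in auto)
  also have "\<dots> = (\<Sum>p\<in>set (map fst L). (\<integral>\<^sup>+x. f x \<partial>measure_pmf p) *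
                  sum_list (map (\<lambda>z. ennreal (snd z)) (filter (\<lambda>z. fst z = p) L)))"
    unfolding pmf_pmf_of_list[OF wf] using wf
    by (intro sum.cong refl arg_cong2[where f="(*)"] ennreal_sum_list) (auto simp: pmf_of_list_wf_def)
  also have "\<dots> = sum_list (map (\<lambda>z. (\<integral>\<^sup>+x. f x \<partial>measure_pmf (fst z)) * ennreal (snd z)) L)"
    by (rule sum_list_group_by_fst) auto
  also have "\<dots> = sum_list (map (\<lambda>z. ennreal (fst z) * (\<integral>\<^sup>+x. f x \<partial>measure_pmf (snd z))) l)"
    by (simp add: L_def o_def case_prod_beta mult.commute)
  finally show ?thesis .
qed

lemma expectation_mix:
  fixes f :: "'x \<Rightarrow> real"
  assumes l: "weights l" and f: "\<And>x. 0 \<le> f x" "\<And>x. f x \<le> b"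
  shows "measure_pmf.expectation (mix l) f
       = sum_list (map (\<lambda>z. fst z * measure_pmf.expectation (snd z) f) l)"
proof -
  have nn: "0 \<le> measure_pmf.expectation p f" for p using f by simp
  have terms_nn: "\<And>z. z \<in> set l \<Longrightarrow> 0 \<le> fst z * measure_pmf.expectation (snd z) f"
    using l nn by (auto simp: weights_def)
  have "ennreal (measure_pmf.expectation (mix l) f) = (\<integral>\<^sup>+x. ennreal (f x) \<partial>mix l)"
    by (rule nn_integral_eq_expectation[symmetric]) (use f in auto)
  also have "\<dots> = sum_list (map (\<lambda>z. ennreal (fst z) * ennreal (measure_pmf.expectation (snd z) f)) l)"
    by (subst nn_integral_mix[OF l]) (simp add: nn_integral_eq_expectation[OF f])
  also have "\<dots> = sum_list (map (\<lambda>z. ennreal (fst z * measure_pmf.expectation (snd z) f)) l)"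
    using l nn by (intro arg_cong[where f=sum_list] map_cong) (auto simp: weights_def ennreal_mult)
  also have "\<dots> = ennreal (sum_list (map (\<lambda>z. fst z * measure_pmf.expectation (snd z) f) l))"
    by (rule ennreal_sum_list[symmetric]) (use terms_nn in auto)
  finally show ?thesis
    using nn terms_nn by (subst (asm) ennreal_inj) (auto intro!: sum_list_nonneg)
qed

lemma map_mix:
  assumes "weights l"
  shows "map_pmf g (mix l) = mix (map (\<lambda>z. (fst z, map_pmf g (snd z))) l)"
proof (rule pmf_eqI)
  have integrals: "(\<integral>\<^sup>+x. f x \<partial>map_pmf g (mix l))
      = (\<integral>\<^sup>+x. f x \<partial>mix (map (\<lambda>z. (fst z, map_pmf g (snd z))) l))" for f
    by (simp only: nn_integral_map_pmf nn_integral_mix[OF assms]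
        nn_integral_mix[OF weights_map_snd[OF assms]]) (simp add: o_def)
  fix y
  have "emeasure (map_pmf g (mix l)) {y} = emeasure (mix (map (\<lambda>z. (fst z, map_pmf g (snd z))) l)) {y}"
    using integrals[of "indicator {y}"] by (simp only: nn_integral_indicator sets_measure_pmf UNIV_I)
  then show "pmf (map_pmf g (mix l)) y = pmf (mix (map (\<lambda>z. (fst z, map_pmf g (snd z))) l)) y"
    by (simp add: emeasure_pmf_single)
qed

lemma set_pmf_mix:
  assumes "weights l"
  shows "set_pmf (mix l) \<subseteq> (\<Union>z\<in>set l. set_pmf (snd z))"
  using set_pmf_of_list[OF weights_pmf_of_list_wf[OF assms]]
  unfolding mix_def by (force simp: case_prod_beta)

section \<open>Multiplicities and the distance bound da\<close>

text \<open>Every probabilistic multiplicity is below itself (witnessed by the diagonal coupling);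
  hence the denotations contain the distributions they are built from.\<close>
lemma pm_le_refl: "p \<sqsubseteq>\<^sub>m p"
proof -
  define \<omega> where "\<omega> = map_pmf (\<lambda>m. (m, m)) p"
  have c: "\<omega> \<in> couplings p p" by (simp add: couplings_def \<omega>_def pmf.map_comp o_def)
  have pw: "pmf \<omega> (m', m) = (if m' = m then pmf p m else 0)" for m' m
  proof (cases "m' = m")
    case True
    then show ?thesis unfolding \<omega>_def using pmf_map_inj'[of "\<lambda>m. (m, m)" p m] by (simp add: inj_on_def)
  next
    case False
    then show ?thesis unfolding \<omega>_def by (subst pmf_map_outside) auto
  qed
  have "weighting \<omega> m x \<le> ennreal_of_enat (m x)" for m x
  proof -
    have e1: "(\<lambda>m'. ennreal (pmf \<omega> (m', m))) = (\<lambda>m'. ennreal (pmf p m) * indicator {m} m')"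
      by (auto simp: pw split: split_indicator)
    have e2: "(\<lambda>m'. ennreal (pmf \<omega> (m', m)) * ennreal_of_enat (m' x))
            = (\<lambda>m'. (ennreal (pmf p m) * ennreal_of_enat (m x)) * indicator {m} m')"
      by (auto simp: pw split: split_indicator)
    have mass: "(\<integral>\<^sup>+ m'. ennreal (pmf \<omega> (m', m)) \<partial>count_space UNIV) = ennreal (pmf p m)"
      unfolding e1 by (subst nn_integral_cmult_indicator) auto
    have weighted: "(\<integral>\<^sup>+ m'. ennreal (pmf \<omega> (m', m)) * ennreal_of_enat (m' x) \<partial>count_space UNIV)
              = ennreal (pmf p m) * ennreal_of_enat (m x)"
      unfolding e2 by (subst nn_integral_cmult_indicator) auto
    show ?thesis
      unfolding weighting_def Let_def mass weighted
      by (auto simp: mult.commute[of "ennreal (pmf p m)"] ennreal_mult_divide_eq)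
  qed
  then show ?thesis unfolding pm_le_def using c by blast
qed

lemma epow_bounds: "0 \<le> c \<Longrightarrow> c \<le> 1 \<Longrightarrow> 0 \<le> epow c n \<and> epow c n \<le> 1"
  by (cases n) (auto simp: epow_def power_le_one)

lemma epow_add: "epow c (a + b) = epow c a * epow c b"
  by (cases a; cases b) (auto simp: epow_def power_add)

lemma epow_0: "epow c 0 = 1"
  by (simp add: epow_def zero_enat_def)

lemma epow_1: "epow c 1 = c"
  by (simp add: epow_def one_enat_def)

definition unit_valued :: "('v \<Rightarrow> real) \<Rightarrow> bool" where
  "unit_valued e \<longleftrightarrow> (\<forall>x. 0 \<le> e x \<and> e x \<le> 1)"

lemma unit_valued_bisim: "unit_valued (\<lambda>x. bisim_metric (\<sigma>1 x) (\<sigma>2 x))"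
  by (simp add: unit_valued_def bisim_metric_bounds)

text \<open>The probability that no variable in V is "hit": prod_{x in V} (1 - e x)^(m x).\<close>
definition survival :: "'v set \<Rightarrow> 'v mult \<Rightarrow> ('v \<Rightarrow> real) \<Rightarrow> real" where
  "survival V m e = (\<Prod>x\<in>V. epow (1 - e x) (m x))"

lemma epow_unit_bounds: "unit_valued e \<Longrightarrow> 0 \<le> epow (1 - e x) n \<and> epow (1 - e x) n \<le> 1"
  by (rule epow_bounds) (auto simp: unit_valued_def)

lemma survival_bounds: "unit_valued e \<Longrightarrow> 0 \<le> survival V m e \<and> survival V m e \<le> 1"
  using epow_unit_bounds[of e] unfolding survival_def by (auto intro!: prod_nonneg prod_le_1)

lemma survival_plus: "survival V (\<lambda>x. m1 x + m2 x) e = survival V m1 e * survival V m2 e"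
  by (simp add: survival_def epow_add prod.distrib)

lemma dda_finite_support:
  assumes "finite V" "\<And>x. x \<notin> V \<Longrightarrow> m x = 0" "unit_valued e"
  shows "dda m e = 1 - survival V m e"
proof -
  define f where "f = (\<lambda>x. epow (1 - e x) (m x))"
  have f_bounds: "0 \<le> f x \<and> f x \<le> 1" for x unfolding f_def by (rule epow_unit_bounds[OF assms(3)])
  have "Inf ((\<lambda>F. \<Prod>x\<in>F. f x) ` {F. finite F}) = prod f V"
  proof (rule cInf_eq_minimum)
    show "prod f V \<in> (\<lambda>F. \<Prod>x\<in>F. f x) ` {F. finite F}" using assms(1) by auto
    fix y assume "y \<in> (\<lambda>F. \<Prod>x\<in>F. f x) ` {F. finite F}"
    then obtain F where F: "finite F" and y: "y = prod f F" by auto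
    have "prod f F = prod f (F \<inter> V) * prod f (F - V)" by (rule prod.Int_Diff[OF F])
    also have "prod f (F - V) = 1" using assms(2) by (intro prod.neutral) (simp add: f_def epow_0)
    finally have y_eq: "y = prod f (V \<inter> F)" using y by (simp add: Int_commute)
    have "prod f V = prod f (V \<inter> F) * prod f (V - F)" by (rule prod.Int_Diff[OF assms(1)])
    also have "\<dots> \<le> prod f (V \<inter> F) * 1"
      using f_bounds by (intro mult_left_mono prod_le_1 prod_nonneg) auto
    finally show "prod f V \<le> y" using y_eq by simp
  qed
  then show ?thesis by (simp add: dda_def survival_def f_def)
qed

lemma dda_bounds:
  assumes "unit_valued e"
  shows "0 \<le> dda m e \<and> dda m e \<le> 1"
proof -
  define S where "S = (\<lambda>F. \<Prod>x\<in>F. epow (1 - e x) (m x)) ` {F. finite F}"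
  have S_bounds: "s \<in> S \<Longrightarrow> 0 \<le> s \<and> s \<le> 1" for s
    using epow_unit_bounds[OF assms] unfolding S_def by (auto intro!: prod_nonneg prod_le_1)
  have one: "1 \<in> S" unfolding S_def by (auto intro!: image_eqI[of _ _ "{}"])
  have "Inf S \<le> 1" by (rule cInf_lower[OF one]) (use S_bounds in \<open>auto intro!: bdd_belowI[of _ 0]\<close>)
  moreover have "0 \<le> Inf S" using one S_bounds by (intro cInf_greatest) auto
  ultimately show ?thesis by (simp add: dda_def S_def)
qed

lemma pda_bounds: "unit_valued e \<Longrightarrow> 0 \<le> pda p e \<and> pda p e \<le> 1"
  unfolding pda_def using dda_bounds[of e] expectation_bounds[of 0 "\<lambda>m. dda m e" 1 p] by auto

lemma pda_le_da: "unit_valued e \<Longrightarrow> p \<in> P \<Longrightarrow> pda p e \<le> da P e"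
  unfolding da_def by (rule cSup_upper) (use pda_bounds in \<open>auto intro!: bdd_aboveI[of _ 1]\<close>)

definition supported_on :: "'v mult pmf \<Rightarrow> 'v set \<Rightarrow> bool" where
  "supported_on p V \<longleftrightarrow> (\<forall>m\<in>set_pmf p. \<forall>x. x \<notin> V \<longrightarrow> m x = 0)"

lemma supported_on_mono: "supported_on p V \<Longrightarrow> V \<subseteq> W \<Longrightarrow> supported_on p W"
  by (auto simp: supported_on_def)

lemma pda_finite_support:
  assumes "finite V" "supported_on p V" "unit_valued e"
  shows "pda p e = 1 - measure_pmf.expectation p (\<lambda>m. survival V m e)"
proof -
  have "pda p e = measure_pmf.expectation p (\<lambda>m. 1 - survival V m e)"
    unfolding pda_def using assms
    by (intro integral_cong_AE) (auto simp: AE_measure_pmf_iff supported_on_def intro!: dda_finite_support)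
  also have "\<dots> = 1 - measure_pmf.expectation p (\<lambda>m. survival V m e)"
    by (rule expectation_one_minus) (use survival_bounds[OF assms(3)] in auto)
  finally show ?thesis .
qed

lemma pda_zero: "unit_valued e \<Longrightarrow> pda (return_pmf (\<lambda>_. 0)) e = 0"
  unfolding pda_def by (simp add: dda_finite_support[of "{}"] survival_def)

lemma pda_one_var: "unit_valued e \<Longrightarrow> pda (return_pmf (one_var x)) e = e x"
  unfolding pda_def using dda_finite_support[of "{x}" "one_var x" e]
  by (simp add: survival_def one_var_def epow_1)

definition par_mult :: "'v mult pmf \<Rightarrow> 'v mult pmf \<Rightarrow> 'v mult pmf" where
  "par_mult p1 p2 = map_pmf (\<lambda>(m1, m2). \<lambda>x. m1 x + m2 x) (pair_pmf p1 p2)"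

lemma supported_on_par_mult:
  "supported_on p1 V \<Longrightarrow> supported_on p2 V \<Longrightarrow> supported_on (par_mult p1 p2) V"
  by (auto simp: supported_on_def par_mult_def)

text \<open>Independent sums of multiplicities: the survival probabilities multiply.\<close>
lemma pda_par_mult:
  assumes "finite V" "supported_on p1 V" "supported_on p2 V" "unit_valued e"
  shows "pda (par_mult p1 p2) e = 1 - (1 - pda p1 e) * (1 - pda p2 e)"
proof -
  have sb: "0 \<le> survival V m e \<and> survival V m e \<le> 1" for m by (rule survival_bounds[OF assms(4)])
  have "pda (par_mult p1 p2) e = 1 - measure_pmf.expectation (par_mult p1 p2) (\<lambda>m. survival V m e)"
    by (rule pda_finite_support[OF assms(1) supported_on_par_mult[OF assms(2,3)] assms(4)])
  also have "measure_pmf.expectation (par_mult p1 p2) (\<lambda>m. survival V m e)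
      = measure_pmf.expectation (pair_pmf p1 p2) (\<lambda>z. survival V (fst z) e * survival V (snd z) e)"
    by (simp add: par_mult_def case_prod_beta survival_plus)
  also have "\<dots> = measure_pmf.expectation p1 (\<lambda>m. survival V m e) *
                  measure_pmf.expectation p2 (\<lambda>m. survival V m e)"
    by (rule expectation_pair_prod) (use sb in auto)
  also have "\<dots> = (1 - pda p1 e) * (1 - pda p2 e)"
    using pda_finite_support[OF assms(1,2,4)] pda_finite_support[OF assms(1,3,4)] by simp
  finally show ?thesis .
qed

lemma pda_mix:
  "weights l \<Longrightarrow> unit_valued e \<Longrightarrow> pda (mix l) e = sum_list (map (\<lambda>z. fst z * pda (snd z) e) l)"
  unfolding pda_def by (rule expectation_mix[where b=1]) (use dda_bounds in auto)

lemma supported_on_mix: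
  "weights l \<Longrightarrow> (\<And>z. z \<in> set l \<Longrightarrow> supported_on (snd z) V) \<Longrightarrow> supported_on (mix l) V"
  using set_pmf_mix[of l] unfolding supported_on_def by blast

section \<open>Transitions of the operators\<close>

inductive_cases trans_nilE: "trans PNil a \<pi>"
inductive_cases trans_prefE: "trans (Pref b qs) a \<pi>"
inductive_cases trans_plusE: "trans (Plus t1 t2) a \<pi>"
inductive_cases trans_parE: "trans (Par B t1 t2) a \<pi>"

lemma der_nil: "der PNil a = {}"
  by (auto simp: der_def elim: trans_nilE)

lemma der_pref:
  "der (Pref b qs) a = (if a = b then {mix (map (\<lambda>(q, u). (q, return_pmf u)) qs)} else {})"
  by (auto simp: der_def elim: trans_prefE intro: trans.pref)

lemma der_plus: "der (Plus t1 t2) a = der t1 a \<union> der t2 a"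
  by (auto simp: der_def elim: trans_plusE intro: trans.plus1 trans.plus2)

lemma trans_par_cases:
  assumes "trans (Par B t1 t2) a \<pi>"
  obtains (sync) \<pi>1 \<pi>2 where "a \<in> B" "trans t1 a \<pi>1" "trans t2 a \<pi>2"
      "\<pi> = map_pmf (\<lambda>(x, y). Par B x y) (pair_pmf \<pi>1 \<pi>2)"
  | (left) \<pi>1 where "a \<notin> B" "trans t1 a \<pi>1" "\<pi> = map_pmf (\<lambda>x. Par B x t2) \<pi>1"
  | (right) \<pi>2 where "a \<notin> B" "trans t2 a \<pi>2" "\<pi> = map_pmf (\<lambda>y. Par B t1 y) \<pi>2"
  using assms by (cases rule: trans_parE) auto

text \<open>Interleaving steps of a parallel composition are synchronous steps in which the idle
  component makes a Dirac move.\<close>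
lemma map_par_left:
  "map_pmf (\<lambda>x. Par B x t2) \<pi>1 = map_pmf (\<lambda>(x, y). Par B x y) (pair_pmf \<pi>1 (return_pmf t2))"
  by (simp add: pair_return_pmf2 pmf.map_comp o_def)

lemma map_par_right:
  "map_pmf (\<lambda>y. Par B t1 y) \<pi>2 = map_pmf (\<lambda>(x, y). Par B x y) (pair_pmf (return_pmf t1) \<pi>2)"
  by (simp add: pair_return_pmf1 pmf.map_comp o_def)

lemma proc_plus: "proc (Plus t1 t2) \<longleftrightarrow> proc t1 \<and> proc t2"
  by (auto simp: proc_def)

lemma proc_par: "proc (Par B t1 t2) \<longleftrightarrow> proc t1 \<and> proc t2"
  by (auto simp: proc_def)

section \<open>Non-extensiveness of the operators\<close>

lemma bisim_metric_nil: "bisim_metric PNil PNil = 0"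
proof (rule antisym)
  show "bisim_metric PNil PNil \<le> 0"
    by (rule bisim_metric_le_hausdorff) (simp_all add: der_nil hausdorff_empty)
qed (simp add: bisim_metric_bounds)

text \<open>Prefix: the distance is at most the weighted sum of the distances of the arguments,
  witnessed by the coupling that pairs the i-th arguments.\<close>
lemma kantorovich_mix_return:
  assumes d: "\<And>x y. 0 \<le> d x y \<and> d x y \<le> 1" and l: "weights l"
  shows "kantorovich d (mix (map (\<lambda>z. (fst z, return_pmf (fst (snd z)))) l))
                       (mix (map (\<lambda>z. (fst z, return_pmf (snd (snd z)))) l))
         \<le> sum_list (map (\<lambda>z. fst z * d (fst (snd z)) (snd (snd z))) l)"
proof -
  define \<omega> where "\<omega> = mix (map (\<lambda>z. (fst z, return_pmf (snd z))) l)"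
  have "\<omega> \<in> couplings (mix (map (\<lambda>z. (fst z, return_pmf (fst (snd z)))) l))
                       (mix (map (\<lambda>z. (fst z, return_pmf (snd (snd z)))) l))"
    unfolding couplings_def \<omega>_def by (simp add: map_mix[OF weights_map_snd[OF l]] o_def)
  then have "kantorovich d (mix (map (\<lambda>z. (fst z, return_pmf (fst (snd z)))) l))
                       (mix (map (\<lambda>z. (fst z, return_pmf (snd (snd z)))) l))
        \<le> measure_pmf.expectation \<omega> (\<lambda>(t, t'). d t t')"
    by (rule kantorovich_le_coupling) (use d in auto)
  also have "\<dots> = sum_list (map (\<lambda>z. fst z * d (fst (snd z)) (snd (snd z))) l)"
    unfolding \<omega>_def
    by (subst expectation_mix[OF weights_map_snd[OF l], where b=1]) (use d in \<open>auto simp: o_def case_prod_beta\<close>)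
  finally show ?thesis .
qed

lemma bisim_metric_pref:
  assumes l: "weights l"
  shows "bisim_metric (Pref a (map (\<lambda>z. (fst z, fst (snd z))) l)) (Pref a (map (\<lambda>z. (fst z, snd (snd z))) l))
         \<le> sum_list (map (\<lambda>z. fst z * bisim_metric (fst (snd z)) (snd (snd z))) l)"
    (is "bisim_metric ?u ?v \<le> ?S l")
proof (rule bisim_metric_le_hausdorff)
  show nn: "0 \<le> ?S l"
    using l by (auto simp: weights_def bisim_metric_bounds intro!: sum_list_nonneg mult_nonneg_nonneg)
  let ?mix = "\<lambda>l. mix (map (\<lambda>z. (fst z, return_pmf (fst (snd z)))) l)"
  let ?mix' = "\<lambda>l. mix (map (\<lambda>z. (fst z, return_pmf (snd (snd z)))) l)"
  define l' where "l' = map (\<lambda>z. (fst z, snd (snd z), fst (snd z))) l"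
  have "kantorovich bisim_metric (?mix l) (?mix' l) \<le> ?S l"
    by (rule kantorovich_mix_return[OF _ l]) (simp add: bisim_metric_bounds)
  moreover have "kantorovich bisim_metric (?mix l') (?mix' l') \<le> ?S l'"
    using l by (intro kantorovich_mix_return) (auto simp: bisim_metric_bounds weights_def l'_def o_def)
  then have "kantorovich bisim_metric (?mix' l) (?mix l) \<le> ?S l"
    by (simp add: l'_def o_def bisim_metric_sym[of "snd (snd _)"])
  ultimately show "hausdorff (kantorovich bisim_metric) (der ?u b) (der ?v b) \<le> ?S l" for b
    using nn by (simp add: der_pref hausdorff_single hausdorff_empty o_def case_prod_beta)
qed

lemma bisim_metric_plus:
  "bisim_metric (Plus u1 u2) (Plus v1 v2) \<le> max (bisim_metric u1 v1) (bisim_metric u2 v2)"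
proof (cases "proc (Plus u1 u2) \<and> proc (Plus v1 v2)")
  case False
  then show ?thesis
    using metric_dom_nonproc[OF bisim_metric_dom False] bisim_metric_bounds[of u1 v1]
    by (simp add: le_max_iff_disj)
next
  case True
  then have procs: "proc u1" "proc u2" "proc v1" "proc v2" by (auto simp: proc_plus)
  let ?K = "kantorovich bisim_metric"
  show ?thesis
  proof (rule bisim_metric_le_hausdorff)
    show "0 \<le> max (bisim_metric u1 v1) (bisim_metric u2 v2)"
      using bisim_metric_bounds[of u1 v1] by (simp add: le_max_iff_disj)
    fix a
    have h1: "hausdorff ?K (der u1 a) (der v1 a) \<le> bisim_metric u1 v1"
      and h2: "hausdorff ?K (der u2 a) (der v2 a) \<le> bisim_metric u2 v2"
      using procs by (auto intro: hausdorff_le_bisim_metric)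
    have "hemi ?K (der u1 a \<union> der u2 a) (der v1 a \<union> der v2 a)
          \<le> max (hemi ?K (der u1 a) (der v1 a)) (hemi ?K (der u2 a) (der v2 a))"
     and "hemi ?K (der v1 a \<union> der v2 a) (der u1 a \<union> der u2 a)
          \<le> max (hemi ?K (der v1 a) (der u1 a)) (hemi ?K (der v2 a) (der u2 a))"
      by (rule hemi_union, rule kantorovich_bisim_bounds)+
    then show "hausdorff ?K (der (Plus u1 u2) a) (der (Plus v1 v2) a)
               \<le> max (bisim_metric u1 v1) (bisim_metric u2 v2)"
      using h1 h2 unfolding der_plus hausdorff_hemi by (auto simp: max_def split: if_splits)
  qed
qed

text \<open>If d' is bounded on parallel pairs by 1 - (1 - d)(1 - d), then
  the product of two couplings gives a coupling of the composed derivatives whose d'-cost is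
  bounded by the same expression in the d-costs.\<close>
lemma kantorovich_par_pair:
  fixes d d' :: "('a, 'v) pterm \<Rightarrow> ('a, 'v) pterm \<Rightarrow> real"
  assumes d: "\<And>x y. 0 \<le> d x y \<and> d x y \<le> 1"
    and d': "\<And>x y. 0 \<le> d' x y \<and> d' x y \<le> 1"
    and dp: "\<And>x1 x2 y1 y2. d' (Par B x1 x2) (Par B y1 y2) \<le> 1 - (1 - d x1 y1) * (1 - d x2 y2)"
    and w1: "\<omega>1 \<in> couplings \<pi>1 \<rho>1" and w2: "\<omega>2 \<in> couplings \<pi>2 \<rho>2"
  shows "kantorovich d' (map_pmf (\<lambda>(x, y). Par B x y) (pair_pmf \<pi>1 \<pi>2))
                        (map_pmf (\<lambda>(x, y). Par B x y) (pair_pmf \<rho>1 \<rho>2))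
         \<le> 1 - (1 - measure_pmf.expectation \<omega>1 (\<lambda>(t, t'). d t t'))
               * (1 - measure_pmf.expectation \<omega>2 (\<lambda>(t, t'). d t t'))"
proof -
  define \<omega> where "\<omega> = map_pmf (\<lambda>((x1, y1), (x2, y2)). (Par B x1 x2, Par B y1 y2)) (pair_pmf \<omega>1 \<omega>2)"
  define dd where "dd = (\<lambda>(t, t'). d t t')"
  have dd: "0 \<le> dd z \<and> dd z \<le> 1" for z using d by (auto simp: dd_def split: prod.splits)
  have "map_pmf fst \<omega> = map_pmf (\<lambda>(x, y). Par B x y) (map_pmf (\<lambda>(a, b). (fst a, fst b)) (pair_pmf \<omega>1 \<omega>2))"
   and "map_pmf snd \<omega> = map_pmf (\<lambda>(x, y). Par B x y) (map_pmf (\<lambda>(a, b). (snd a, snd b)) (pair_pmf \<omega>1 \<omega>2))"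
    unfolding \<omega>_def pmf.map_comp by (auto intro!: map_pmf_cong)
  then have "\<omega> \<in> couplings (map_pmf (\<lambda>(x, y). Par B x y) (pair_pmf \<pi>1 \<pi>2))
                           (map_pmf (\<lambda>(x, y). Par B x y) (pair_pmf \<rho>1 \<rho>2))"
    using w1 w2 by (simp add: map_pair couplings_def)
  then have "kantorovich d' (map_pmf (\<lambda>(x, y). Par B x y) (pair_pmf \<pi>1 \<pi>2))
                        (map_pmf (\<lambda>(x, y). Par B x y) (pair_pmf \<rho>1 \<rho>2))
        \<le> measure_pmf.expectation \<omega> (\<lambda>(t, t'). d' t t')"
    by (rule kantorovich_le_coupling) (use d' in auto)
  also have "\<dots> = measure_pmf.expectation (pair_pmf \<omega>1 \<omega>2)
       (\<lambda>z. d' (Par B (fst (fst z)) (fst (snd z))) (Par B (snd (fst z)) (snd (snd z))))"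
    unfolding \<omega>_def by (simp add: case_prod_beta)
  also have "\<dots> \<le> measure_pmf.expectation (pair_pmf \<omega>1 \<omega>2) (\<lambda>z. 1 - (1 - dd (fst z)) * (1 - dd (snd z)))"
    using d' dp dd by (intro expectation_mono) (auto simp: dd_def case_prod_beta mult_le_one)
  also have "\<dots> = 1 - measure_pmf.expectation (pair_pmf \<omega>1 \<omega>2) (\<lambda>z. (1 - dd (fst z)) * (1 - dd (snd z)))"
    by (rule expectation_one_minus) (use dd in \<open>auto intro: mult_le_one\<close>)
  also have "measure_pmf.expectation (pair_pmf \<omega>1 \<omega>2) (\<lambda>z. (1 - dd (fst z)) * (1 - dd (snd z)))
      = measure_pmf.expectation \<omega>1 (\<lambda>z. 1 - dd z) * measure_pmf.expectation \<omega>2 (\<lambda>z. 1 - dd z)"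
    by (rule expectation_pair_prod) (use dd in auto)
  also have "measure_pmf.expectation \<omega>1 (\<lambda>z. 1 - dd z) = 1 - measure_pmf.expectation \<omega>1 dd"
    by (rule expectation_one_minus) (use dd in auto)
  also have "measure_pmf.expectation \<omega>2 (\<lambda>z. 1 - dd z) = 1 - measure_pmf.expectation \<omega>2 dd"
    by (rule expectation_one_minus) (use dd in auto)
  finally show ?thesis by (simp add: dd_def)
qed

lemma complement_product_perturb:
  fixes E1 E2 c1 c2 \<delta> :: real
  assumes "0 \<le> E1" "E1 \<le> 1" "0 \<le> E2" "E2 \<le> 1" "E1 \<le> c1 + \<delta>" "E2 \<le> c2 + \<delta>"
    "0 \<le> c1" "c1 \<le> 1" "0 \<le> c2" "c2 \<le> 1" "0 \<le> \<delta>"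
  shows "1 - (1 - E1) * (1 - E2) \<le> 1 - (1 - c1) * (1 - c2) + 2 * \<delta>"
proof -
  have "(1 - c1) * ((1 - c2) - (1 - E2)) \<le> \<delta>" "(1 - E2) * ((1 - c1) - (1 - E1)) \<le> \<delta>"
    using assms by (auto intro!: order_trans[OF mult_left_mono mult_left_le_one_le[of \<delta>]])
  moreover have "(1 - c1) * (1 - c2) - (1 - E1) * (1 - E2)
      = (1 - c1) * ((1 - c2) - (1 - E2)) + (1 - E2) * ((1 - c1) - (1 - E1))"
    by (simp add: algebra_simps)
  ultimately show ?thesis by linarith
qed

lemma hemi_matching_coupling:
  assumes d: "\<And>x y. 0 \<le> d x y \<and> d x y \<le> 1"
    and h: "hemi (kantorovich d) P Q \<le> c" and c: "c < 1" and p: "\<pi> \<in> P" and e: "0 < \<epsilon>"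
  shows "\<exists>\<rho>\<in>Q. \<exists>\<omega>\<in>couplings \<pi> \<rho>. measure_pmf.expectation \<omega> (\<lambda>(t, t'). d t t') < c + \<epsilon>"
proof -
  have "infs ((\<lambda>q. kantorovich d \<pi> q) ` Q) \<le> c"
    using hemi_infs_le[of "kantorovich d" \<pi> P Q] kantorovich_bounds[of d] d p h by fastforce
  then obtain \<rho> where "\<rho> \<in> Q" "kantorovich d \<pi> \<rho> < c + \<epsilon>"
    using infs_less_witness[OF _ c e] by blast
  then show ?thesis using kantorovich_less_witness by blast
qed

lemma par_derivative_matching:
  fixes d d' :: "('a, 'v) pterm \<Rightarrow> ('a, 'v) pterm \<Rightarrow> real"
  assumes d: "\<And>x y. 0 \<le> d x y \<and> d x y \<le> 1"
    and d': "\<And>x y. 0 \<le> d' x y \<and> d' x y \<le> 1"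
    and dp: "\<And>x1 x2 y1 y2. d' (Par B x1 x2) (Par B y1 y2) \<le> 1 - (1 - d x1 y1) * (1 - d x2 y2)"
    and h1: "hemi (kantorovich d) (der u1 a) (der v1 a) \<le> c1"
    and h2: "hemi (kantorovich d) (der u2 a) (der v2 a) \<le> c2"
    and c1: "d u1 v1 \<le> c1" "c1 < 1" and c2: "d u2 v2 \<le> c2" "c2 < 1"
    and \<pi>: "trans (Par B u1 u2) a \<pi>" and e: "0 < \<epsilon>"
  shows "\<exists>\<rho>\<in>der (Par B v1 v2) a. kantorovich d' \<pi> \<rho> \<le> 1 - (1 - c1) * (1 - c2) + \<epsilon>"
proof -
  have c0: "0 \<le> c1" "0 \<le> c2" using d[of u1 v1] d[of u2 v2] c1 c2 by auto
  have step: "kantorovich d' (map_pmf (\<lambda>(x, y). Par B x y) (pair_pmf \<pi>1 \<pi>2))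
                  (map_pmf (\<lambda>(x, y). Par B x y) (pair_pmf \<rho>1 \<rho>2)) \<le> 1 - (1 - c1) * (1 - c2) + \<epsilon>"
    if "\<omega>1 \<in> couplings \<pi>1 \<rho>1" "\<omega>2 \<in> couplings \<pi>2 \<rho>2"
       "measure_pmf.expectation \<omega>1 (\<lambda>(t, t'). d t t') \<le> c1 + \<epsilon> / 2"
       "measure_pmf.expectation \<omega>2 (\<lambda>(t, t'). d t t') \<le> c2 + \<epsilon> / 2"
    for \<pi>1 \<pi>2 \<rho>1 \<rho>2 \<omega>1 \<omega>2
  proof -
    have "kantorovich d' (map_pmf (\<lambda>(x, y). Par B x y) (pair_pmf \<pi>1 \<pi>2))
                  (map_pmf (\<lambda>(x, y). Par B x y) (pair_pmf \<rho>1 \<rho>2))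
          \<le> 1 - (1 - measure_pmf.expectation \<omega>1 (\<lambda>(t, t'). d t t'))
                * (1 - measure_pmf.expectation \<omega>2 (\<lambda>(t, t'). d t t'))"
      by (rule kantorovich_par_pair[where d=d and d'=d' and B=B, OF d d' dp that(1,2)])
    also have "\<dots> \<le> 1 - (1 - c1) * (1 - c2) + 2 * (\<epsilon> / 2)"
      using coupling_expectation_bounds[of d \<omega>1, OF d] coupling_expectation_bounds[of d \<omega>2, OF d]
        that(3,4) c0 c1 c2 e by (intro complement_product_perturb) auto
    finally show ?thesis by simp
  qed
  have e2: "0 < \<epsilon> / 2" using e by simp
  note match1 = hemi_matching_coupling[OF d h1 c1(2) _ e2] and match2 = hemi_matching_coupling[OF d h2 c2(2) _ e2]
  from \<pi> show ?thesis
  proof (cases rule: trans_par_cases)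
    case (sync \<pi>1 \<pi>2)
    obtain \<rho>1 \<omega>1 where r1: "\<rho>1 \<in> der v1 a" "\<omega>1 \<in> couplings \<pi>1 \<rho>1"
        "measure_pmf.expectation \<omega>1 (\<lambda>(t, t'). d t t') < c1 + \<epsilon> / 2"
      using match1[of \<pi>1] sync by (auto simp: der_def)
    obtain \<rho>2 \<omega>2 where r2: "\<rho>2 \<in> der v2 a" "\<omega>2 \<in> couplings \<pi>2 \<rho>2"
        "measure_pmf.expectation \<omega>2 (\<lambda>(t, t'). d t t') < c2 + \<epsilon> / 2"
      using match2[of \<pi>2] sync by (auto simp: der_def)
    have "map_pmf (\<lambda>(x, y). Par B x y) (pair_pmf \<rho>1 \<rho>2) \<in> der (Par B v1 v2) a"
      using r1(1) r2(1) sync by (auto simp: der_def intro: trans.sync)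
    moreover have "kantorovich d' \<pi> (map_pmf (\<lambda>(x, y). Par B x y) (pair_pmf \<rho>1 \<rho>2))
                   \<le> 1 - (1 - c1) * (1 - c2) + \<epsilon>"
      unfolding sync(4) by (rule step[OF r1(2) r2(2)]) (use r1(3) r2(3) in auto)
    ultimately show ?thesis by blast
  next
    case (left \<pi>1)
    obtain \<rho>1 \<omega>1 where r1: "\<rho>1 \<in> der v1 a" "\<omega>1 \<in> couplings \<pi>1 \<rho>1"
        "measure_pmf.expectation \<omega>1 (\<lambda>(t, t'). d t t') < c1 + \<epsilon> / 2"
      using match1[of \<pi>1] left by (auto simp: der_def)
    have "map_pmf (\<lambda>y. Par B y v2) \<rho>1 \<in> der (Par B v1 v2) a"
      using r1(1) left by (auto simp: der_def intro: trans.left)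
    moreover have "kantorovich d' \<pi> (map_pmf (\<lambda>y. Par B y v2) \<rho>1) \<le> 1 - (1 - c1) * (1 - c2) + \<epsilon>"
      unfolding left(3) map_par_left
      by (rule step[OF r1(2) return_pmf_coupling]) (use r1(3) c2 e in auto)
    ultimately show ?thesis by blast
  next
    case (right \<pi>2)
    obtain \<rho>2 \<omega>2 where r2: "\<rho>2 \<in> der v2 a" "\<omega>2 \<in> couplings \<pi>2 \<rho>2"
        "measure_pmf.expectation \<omega>2 (\<lambda>(t, t'). d t t') < c2 + \<epsilon> / 2"
      using match2[of \<pi>2] right by (auto simp: der_def)
    have "map_pmf (\<lambda>y. Par B v1 y) \<rho>2 \<in> der (Par B v1 v2) a"
      using r2(1) right by (auto simp: der_def intro: trans.right)
    moreover have "kantorovich d' \<pi> (map_pmf (\<lambda>y. Par B v1 y) \<rho>2) \<le> 1 - (1 - c1) * (1 - c2) + \<epsilon>"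
      unfolding right(3) map_par_right
      by (rule step[OF return_pmf_coupling r2(2)]) (use r2(3) c1 e in auto)
    ultimately show ?thesis by blast
  qed
qed

lemma hemi_par:
  fixes d d' :: "('a, 'v) pterm \<Rightarrow> ('a, 'v) pterm \<Rightarrow> real"
  assumes d: "\<And>x y. 0 \<le> d x y \<and> d x y \<le> 1"
    and d': "\<And>x y. 0 \<le> d' x y \<and> d' x y \<le> 1"
    and dp: "\<And>x1 x2 y1 y2. d' (Par B x1 x2) (Par B y1 y2) \<le> 1 - (1 - d x1 y1) * (1 - d x2 y2)"
    and h1: "hemi (kantorovich d) (der u1 a) (der v1 a) \<le> c1"
    and h2: "hemi (kantorovich d) (der u2 a) (der v2 a) \<le> c2"
    and c1: "d u1 v1 \<le> c1" "c1 \<le> 1" and c2: "d u2 v2 \<le> c2" "c2 \<le> 1"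
  shows "hemi (kantorovich d') (der (Par B u1 u2) a) (der (Par B v1 v2) a) \<le> 1 - (1 - c1) * (1 - c2)"
proof (cases "c1 = 1 \<or> c2 = 1")
  case True
  then show ?thesis using hemi_bounds[of "kantorovich d'"] kantorovich_bounds[of d', OF d'] by auto
next
  case False
  then have lt: "c1 < 1" "c2 < 1" using c1 c2 by auto
  have K': "\<And>\<pi> \<rho>. 0 \<le> kantorovich d' \<pi> \<rho>" using kantorovich_bounds[of d', OF d'] by blast
  have "infs ((\<lambda>\<rho>. kantorovich d' \<pi> \<rho>) ` der (Par B v1 v2) a) \<le> 1 - (1 - c1) * (1 - c2)"
    if "\<pi> \<in> der (Par B u1 u2) a" for \<pi>
  proof (rule field_le_epsilon)
    fix \<epsilon> :: real assume "0 < \<epsilon>"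
    moreover have "trans (Par B u1 u2) a \<pi>" using that by (simp add: der_def)
    ultimately obtain \<rho> where "\<rho> \<in> der (Par B v1 v2) a" "kantorovich d' \<pi> \<rho> \<le> 1 - (1 - c1) * (1 - c2) + \<epsilon>"
      using par_derivative_matching[OF d d' dp h1 h2 c1(1) lt(1) c2(1) lt(2)] by blast
    then show "infs ((\<lambda>\<rho>. kantorovich d' \<pi> \<rho>) ` der (Par B v1 v2) a) \<le> 1 - (1 - c1) * (1 - c2) + \<epsilon>"
      using K' by (fastforce intro: order_trans[OF infs_lower])
  qed
  moreover have "0 \<le> 1 - (1 - c1) * (1 - c2)"
    using d[of u1 v1] d[of u2 v2] c1 c2 by (simp add: mult_le_one)
  ultimately show ?thesis unfolding hemi_def by (auto intro!: sups_least)
qed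

text \<open>Up-to technique for parallel composition: lowering the bisimilarity metric on parallel
  pairs to 1 - (1 - d u1 v1)(1 - d u2 v2) still yields a prefixed point of B, so by
  minimality the bisimilarity metric satisfies this bound.\<close>
definition par_refined :: "('a, 'v) pterm \<Rightarrow> ('a, 'v) pterm \<Rightarrow> real" where
  "par_refined s s' = (case s of Par B u1 u2 \<Rightarrow> (case s' of Par B' v1 v2 \<Rightarrow>
       if B = B' then min (bisim_metric s s') (1 - (1 - bisim_metric u1 v1) * (1 - bisim_metric u2 v2))
       else bisim_metric s s'
     | _ \<Rightarrow> bisim_metric s s') | _ \<Rightarrow> bisim_metric s s')"

lemma complement_product_le_one: "(1 - bisim_metric a b) * (1 - bisim_metric c d) \<le> 1"
  using bisim_metric_bounds[of a b] bisim_metric_bounds[of c d] by (simp add: mult_le_one)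

lemma par_refined_le: "par_refined s s' \<le> bisim_metric s s'"
  by (cases s; cases s') (auto simp: par_refined_def)

lemma par_refined_Par:
  "par_refined (Par B x1 x2) (Par B y1 y2) \<le> 1 - (1 - bisim_metric x1 y1) * (1 - bisim_metric x2 y2)"
  by (simp add: par_refined_def)

lemma par_refined_dom: "(par_refined :: ('a, 'v) pterm \<Rightarrow> _) \<in> metric_dom"
proof -
  have "0 \<le> par_refined t t'" for t t' :: "('a, 'v) pterm"
    by (cases t; cases t') (auto simp: par_refined_def bisim_metric_bounds complement_product_le_one)
  then show ?thesis
    using par_refined_le metric_dom_bounds[OF bisim_metric_dom] metric_dom_nonproc[OF bisim_metric_dom]
    unfolding metric_dom_def by (smt (verit) mem_Collect_eq)
qed

lemma par_refined_bounds: "0 \<le> par_refined x y \<and> par_refined x y \<le> 1"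
  by (rule metric_dom_bounds[OF par_refined_dom])

lemma Bfun_par_refined_Par:
  fixes u1 u2 v1 v2 :: "('a, 'v) pterm"
  shows "Bfun par_refined (Par B u1 u2) (Par B v1 v2) \<le> 1 - (1 - bisim_metric u1 v1) * (1 - bisim_metric u2 v2)"
proof (cases "proc (Par B u1 u2) \<and> proc (Par B v1 v2)")
  case False
  then show ?thesis using complement_product_le_one[of u1 v1 u2 v2] by (auto simp: Bfun_def)
next
  case True
  then have procs: "proc u1" "proc u2" "proc v1" "proc v2" by (auto simp: proc_par)
  let ?K = "kantorovich bisim_metric"
  have hemi_le: "hemi ?K (der x a) (der y a) \<le> bisim_metric x y" "hemi ?K (der y a) (der x a) \<le> bisim_metric x y"
    if "proc x" "proc y" for x y :: "('a, 'v) pterm" and a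
    using hausdorff_le_bisim_metric[OF that, of a] unfolding hausdorff_hemi by auto
  have "hemi (kantorovich par_refined) (der (Par B u1 u2) a) (der (Par B v1 v2) a)
        \<le> 1 - (1 - bisim_metric u1 v1) * (1 - bisim_metric u2 v2)" for a
    by (rule hemi_par[where d=bisim_metric])
      (use bisim_metric_bounds par_refined_bounds par_refined_Par
        hemi_le(1)[OF procs(1,3)] hemi_le(1)[OF procs(2,4)] in auto)
  moreover have "hemi (kantorovich par_refined) (der (Par B v1 v2) a) (der (Par B u1 u2) a)
        \<le> 1 - (1 - bisim_metric u1 v1) * (1 - bisim_metric u2 v2)" for a
    by (rule hemi_par[where d=bisim_metric])
      (use bisim_metric_bounds par_refined_bounds par_refined_Par
        hemi_le(2)[OF procs(1,3)] hemi_le(2)[OF procs(2,4)]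
        bisim_metric_sym[of v1 u1] bisim_metric_sym[of v2 u2] in auto)
  ultimately show ?thesis
    unfolding Bfun_def hausdorff_hemi using True complement_product_le_one
    by (auto intro!: sups_least)
qed

lemma par_refined_prefixed: "Bfun par_refined s s' \<le> par_refined s s'"
proof -
  have le: "Bfun par_refined s s' \<le> bisim_metric s s'"
    using Bfun_mono[OF par_refined_dom bisim_metric_dom par_refined_le, of s s']
    by (simp add: bisim_metric_fixpoint)
  show ?thesis
  proof (cases "\<exists>B u1 u2 v1 v2. s = Par B u1 u2 \<and> s' = Par B v1 v2")
    case True
    then show ?thesis using le Bfun_par_refined_Par by (auto simp: par_refined_def)
  next
    case False
    then have "par_refined s s' = bisim_metric s s'"
      by (cases s; cases s') (auto simp: par_refined_def)
    then show ?thesis using le by simp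
  qed
qed

lemma bisim_metric_par:
  "bisim_metric (Par B u1 u2) (Par B v1 v2) \<le> 1 - (1 - bisim_metric u1 v1) * (1 - bisim_metric u2 v2)"
  using bisim_metric_least[OF par_refined_dom par_refined_prefixed, of "Par B u1 u2" "Par B v1 v2"]
    par_refined_Par[of B u1 u2 v1 v2] by linarith

section \<open>The witness construction\<close>

definition witness :: "('v \<Rightarrow> ('a, 'v) pterm) \<Rightarrow> ('v \<Rightarrow> ('a, 'v) pterm) \<Rightarrow> ('a, 'v) pterm \<Rightarrow>
                       'v mult pmf \<Rightarrow> bool" where
  "witness \<sigma>1 \<sigma>2 t p \<longleftrightarrow> p \<in> den t \<and> supported_on p (vars t) \<and>
     bisim_metric (subst \<sigma>1 t) (subst \<sigma>2 t) \<le> pda p (\<lambda>x. bisim_metric (\<sigma>1 x) (\<sigma>2 x))"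

lemma finite_vars: "finite (vars t)"
  by (induction t) auto

lemma witness_nil: "witness \<sigma>1 \<sigma>2 PNil (return_pmf (\<lambda>_. 0))"
  by (simp add: witness_def supported_on_def pda_zero[OF unit_valued_bisim] bisim_metric_nil)

lemma witness_var: "witness \<sigma>1 \<sigma>2 (PVar x) (return_pmf (one_var x))"
proof -
  have "supported_on (return_pmf (one_var x)) (vars (PVar x))"
    by (simp add: supported_on_def one_var_def)
  then show ?thesis
    unfolding witness_def by (auto simp: down_def pda_one_var[OF unit_valued_bisim] intro: pm_le_refl)
qed

lemma witness_plus:
  assumes "witness \<sigma>1 \<sigma>2 t1 p1" "witness \<sigma>1 \<sigma>2 t2 p2"
  shows "\<exists>p. witness \<sigma>1 \<sigma>2 (Plus t1 t2) p"
proof -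
  let ?e = "\<lambda>x. bisim_metric (\<sigma>1 x) (\<sigma>2 x)"
  have "bisim_metric (subst \<sigma>1 (Plus t1 t2)) (subst \<sigma>2 (Plus t1 t2)) \<le> max (pda p1 ?e) (pda p2 ?e)"
    using bisim_metric_plus[of "subst \<sigma>1 t1" "subst \<sigma>1 t2" "subst \<sigma>2 t1" "subst \<sigma>2 t2"] assms
    by (auto simp: witness_def)
  then show ?thesis using assms unfolding witness_def max_def
    by (cases "pda p2 ?e \<le> pda p1 ?e") (auto intro: supported_on_mono)
qed

lemma witness_par:
  assumes "witness \<sigma>1 \<sigma>2 t1 p1" "witness \<sigma>1 \<sigma>2 t2 p2"
  shows "witness \<sigma>1 \<sigma>2 (Par B t1 t2) (par_mult p1 p2)"
proof -
  let ?e = "\<lambda>x. bisim_metric (\<sigma>1 x) (\<sigma>2 x)"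
  let ?d = "\<lambda>t. bisim_metric (subst \<sigma>1 t) (subst \<sigma>2 t)"
  have supp: "supported_on p1 (vars (Par B t1 t2))" "supported_on p2 (vars (Par B t1 t2))"
    using assms by (auto simp: witness_def intro: supported_on_mono)
  have "?d (Par B t1 t2) \<le> 1 - (1 - ?d t1) * (1 - ?d t2)"
    using bisim_metric_par by simp
  also have "\<dots> \<le> 1 - (1 - pda p1 ?e) * (1 - pda p2 ?e)"
    using assms by (intro diff_left_mono mult_mono)
      (auto simp: witness_def bisim_metric_bounds pda_bounds[OF unit_valued_bisim])
  also have "\<dots> = pda (par_mult p1 p2) ?e"
    by (rule pda_par_mult[OF finite_vars supp unit_valued_bisim, symmetric])
  moreover have "par_mult p1 p2 \<in> den (Par B t1 t2)"
    using assms pm_le_refl by (auto simp: witness_def par_mult_def)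
  ultimately show ?thesis
    using supported_on_par_mult[OF supp] by (simp add: witness_def)
qed

lemma list_all2_choice:
  assumes "\<And>z. z \<in> set xs \<Longrightarrow> \<exists>y. P z y"
  shows "\<exists>ys. list_all2 P xs ys"
  using assms
proof (induction xs)
  case (Cons z xs)
  then obtain y ys where "P z y" "list_all2 P xs ys" by force
  then show ?case by (auto intro!: exI[of _ "y # ys"])
qed (auto intro: exI[of _ "[]"])

lemma sum_list_weighted_mono:
  fixes f :: "real \<times> 'z \<Rightarrow> real" and g :: "'p \<Rightarrow> real"
  assumes "list_all2 (\<lambda>z p. f z \<le> g p) qs ps" "\<And>z. z \<in> set qs \<Longrightarrow> 0 \<le> fst z"
  shows "sum_list (map (\<lambda>z. fst z * f z) qs) \<le> sum_list (map (\<lambda>z. fst z * g (snd z)) (zip (map fst qs) ps))"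
  using assms by (induction rule: list_all2_induct) (auto intro: add_mono mult_left_mono)

lemma vars_pref_arg: "z \<in> set qs \<Longrightarrow> vars (snd z) \<subseteq> vars (Pref a qs)"
  by force

lemma mix_witnesses:
  assumes ps: "list_all2 (\<lambda>z p. witness \<sigma>1 \<sigma>2 (snd z) p) qs ps"
    and l: "weights (zip (map fst qs) ps)"
  shows "mix (zip (map fst qs) ps) \<in> den (Pref a qs)"
    and "supported_on (mix (zip (map fst qs) ps)) (vars (Pref a qs))"
proof -
  have "list_all2 (\<lambda>(q, P) p'. p' \<in> P) (map (map_prod id den) qs) ps"
    unfolding list_all2_map1 by (rule list_all2_mono[OF ps]) (auto simp: witness_def)
  then show "mix (zip (map fst qs) ps) \<in> den (Pref a qs)"
    unfolding den.simps mem_Collect_eq by (blast intro: pm_le_refl)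
  show "supported_on (mix (zip (map fst qs) ps)) (vars (Pref a qs))"
  proof (rule supported_on_mix[OF l])
    fix z assume "z \<in> set (zip (map fst qs) ps)"
    then obtain i where i: "i < length qs" "snd z = ps ! i"
      using list_all2_lengthD[OF ps] by (auto simp: in_set_zip)
    then have "witness \<sigma>1 \<sigma>2 (snd (qs ! i)) (snd z)" using list_all2_nthD[OF ps] by simp
    then show "supported_on (snd z) (vars (Pref a qs))"
      using vars_pref_arg[OF nth_mem[OF i(1)]] by (auto simp: witness_def intro: supported_on_mono)
  qed
qed

lemma witness_pref:
  assumes wf: "wf_term (Pref a qs)"
    and IH: "\<And>z. z \<in> set qs \<Longrightarrow> \<exists>p. witness \<sigma>1 \<sigma>2 (snd z) p"
  shows "\<exists>p. witness \<sigma>1 \<sigma>2 (Pref a qs) p"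
proof -
  let ?e = "\<lambda>x. bisim_metric (\<sigma>1 x) (\<sigma>2 x)"
  have qs: "\<And>z. z \<in> set qs \<Longrightarrow> 0 \<le> fst z" "sum_list (map fst qs) = 1"
    using wf by (auto simp: case_prod_beta less_imp_le)
  obtain ps where ps: "list_all2 (\<lambda>z p. witness \<sigma>1 \<sigma>2 (snd z) p) qs ps"
    using list_all2_choice[of qs "\<lambda>z p. witness \<sigma>1 \<sigma>2 (snd z) p"] IH by blast
  define pm where "pm = mix (zip (map fst qs) ps)"
  have len: "length ps = length qs" using list_all2_lengthD[OF ps] by simp
  have l: "weights (zip (map fst qs) ps)"
    using qs len by (auto simp: weights_def dest!: set_zip_leftD)
  have den: "pm \<in> den (Pref a qs)" and supp: "supported_on pm (vars (Pref a qs))"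
    unfolding pm_def using mix_witnesses[OF ps l] by auto
  define l where "l = map (\<lambda>z. (fst z, subst \<sigma>1 (snd z), subst \<sigma>2 (snd z))) qs"
  have "bisim_metric (subst \<sigma>1 (Pref a qs)) (subst \<sigma>2 (Pref a qs))
      = bisim_metric (Pref a (map (\<lambda>z. (fst z, fst (snd z))) l)) (Pref a (map (\<lambda>z. (fst z, snd (snd z))) l))"
    by (simp add: l_def map_prod_def split_def o_def)
  also have "\<dots> \<le> sum_list (map (\<lambda>z. fst z * bisim_metric (fst (snd z)) (snd (snd z))) l)"
    using qs by (intro bisim_metric_pref) (auto simp: weights_def l_def o_def)
  also have "\<dots> = sum_list (map (\<lambda>z. fst z * bisim_metric (subst \<sigma>1 (snd z)) (subst \<sigma>2 (snd z))) qs)"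
    by (simp add: l_def o_def)
  also have "\<dots> \<le> sum_list (map (\<lambda>z. fst z * pda (snd z) ?e) (zip (map fst qs) ps))"
    using qs(1) by (intro sum_list_weighted_mono list_all2_mono[OF ps]) (auto simp: witness_def)
  also have "\<dots> = pda pm ?e"
    unfolding pm_def by (rule pda_mix[OF l unit_valued_bisim, symmetric])
  finally show ?thesis using den supp by (auto simp: witness_def)
qed

lemma witness_exists: "wf_term t \<Longrightarrow> \<exists>p. witness \<sigma>1 \<sigma>2 t p"
proof (induction t)
  case PNil
  show ?case using witness_nil by (rule exI)
next
  case (PVar x)
  show ?case using witness_var by (rule exI)
next
  case (Pref a qs)
  have "\<exists>p. witness \<sigma>1 \<sigma>2 (snd z) p" if "z \<in> set qs" for z
    using Pref.IH[of z "snd z"] Pref.prems that by (cases z) (auto simp: list_all_iff)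
  then show ?case by (rule witness_pref[OF Pref.prems])
next
  case (Plus t1 t2)
  then obtain p1 p2 where "witness \<sigma>1 \<sigma>2 t1 p1" "witness \<sigma>1 \<sigma>2 t2 p2" by auto
  then show ?case by (rule witness_plus)
next
  case (Par B t1 t2)
  then obtain p1 p2 where "witness \<sigma>1 \<sigma>2 t1 p1" "witness \<sigma>1 \<sigma>2 t2 p2" by auto
  then show ?case by (blast intro: witness_par)
qed

text \<open>The argument does not need the hypotheses on
  the variable type, on closedness of the substitutions, or that the variable distances are
  below 1.\<close>
theorem theorem1:
  fixes t :: "('a::countable, 'v::countable) pterm"
    and \<sigma>1 \<sigma>2 :: "'v \<Rightarrow> ('a, 'v) pterm"
  assumes "infinite (UNIV :: 'v set)"
    and "wf_term t"
    and "closed_subst \<sigma>1" and "closed_subst \<sigma>2"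
    and "\<forall>x. bisim_metric (\<sigma>1 x) (\<sigma>2 x) < 1"
  shows "bisim_metric (subst \<sigma>1 t) (subst \<sigma>2 t)
           \<le> da (den t) (\<lambda>x. bisim_metric (\<sigma>1 x) (\<sigma>2 x))"
proof -
  obtain p where "witness \<sigma>1 \<sigma>2 t p"
    using witness_exists[OF assms(2)] by blast
  then have "bisim_metric (subst \<sigma>1 t) (subst \<sigma>2 t) \<le> pda p (\<lambda>x. bisim_metric (\<sigma>1 x) (\<sigma>2 x))"
    by (simp add: witness_def)
  also have "\<dots> \<le> da (den t) (\<lambda>x. bisim_metric (\<sigma>1 x) (\<sigma>2 x))"
    using \<open>witness \<sigma>1 \<sigma>2 t p\<close> by (intro pda_le_da unit_valued_bisim) (simp add: witness_def)
  finally show ?thesis .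
qed

end
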